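(* Let $C_*$ be a dg Frobenius algebra, $H_*$ a dg bialgebra, and $\tau:C_*\to H_*$ a twisting cochain with $\mathrm{Im}(\tau)\subset\mathrm{Prim}(H_* )$. Then $(C_*\otimes H_*,\partial_\tau)$, with product $(a\otimes b)(c\otimes d)=\pm ac\otimes bd$, is a differential graded algebra.
   Context: Graded over $\mathbb{Q}$, Koszul signs. A Frobenius algebra is a (graded) commutative algebra with a non-degenerate inner product satisfying $\langle a,bc\rangle=\langle ab,c\rangle$; it is finite dimensional and the inner product turns the multiplication into a cocommutative comultiplication $\Delta(c)=\sum c_{(1)}\otimes c_{(2)}$, which makes $C_*$ a dg coalgebra. A twisting cochain is a degree $-1$ map with $\partial_H\tau+\tau\partial_C+\mu\circ(\tau\otimes\tau)\circ\Delta=0$. $\mathrm{Prim}(H_* )=\{h:\Delta h=h\otimes1+1\otimes h\}$. The twisted differential is $\partial_\tau(c\otimes h)=\partial_Cc\otimes h\pm c\otimes\partial_Hh+\sum \pm c_{(1)}\otimes[\tau(c_{(2)}),h]$, where $[a,h]=ah-(-1)^{|a||h|}ha$ (for primitive $a$ in a Hopf algebra this equals the conjugation action). *)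

theory Defs
  imports Complex_Main "HOL-Library.Poly_Mapping"
begin

text \<open>
  All graded vector spaces are over the rationals and are represented by a
  homogeneous basis: a (possibly infinite) type of basis elements 'b together with a degree
  function deg :: 'b => int.  The tensor product of spaces with bases 'a and 'b is the space with basis
  'a * 'b (degree = sum of degrees).  Linear maps and products are given on basis elements
  and extended (bi)linearly.  Differentials have degree -1 (homological grading).
\<close>

type_synonym 'b vec = "'b \<Rightarrow>\<^sub>0 rat"

definition ksign :: "int \<Rightarrow> rat" where
  "ksign k = (if even k then 1 else -1)"

definition sc :: "rat \<Rightarrow> 'b vec \<Rightarrow> 'b vec" where
  "sc c x = Poly_Mapping.map (\<lambda>v. c * v) x"

definition bv :: "'b \<Rightarrow> 'b vec" where
  "bv b = Poly_Mapping.single b 1"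

definition lin :: "('a \<Rightarrow> 'b vec) \<Rightarrow> 'a vec \<Rightarrow> 'b vec" where
  "lin f x = (\<Sum>a\<in>Poly_Mapping.keys x. sc (Poly_Mapping.lookup x a) (f a))"

definition lin2 :: "('a \<Rightarrow> 'b \<Rightarrow> 'c vec) \<Rightarrow> 'a vec \<Rightarrow> 'b vec \<Rightarrow> 'c vec" where
  "lin2 f x y = (\<Sum>a\<in>Poly_Mapping.keys x. \<Sum>b\<in>Poly_Mapping.keys y. sc (Poly_Mapping.lookup x a * Poly_Mapping.lookup y b) (f a b))"

definition tens :: "'a vec \<Rightarrow> 'b vec \<Rightarrow> ('a \<times> 'b) vec" where
  "tens x y = lin2 (\<lambda>a b. bv (a, b)) x y"

definition tdeg :: "('a \<Rightarrow> int) \<Rightarrow> ('b \<Rightarrow> int) \<Rightarrow> 'a \<times> 'b \<Rightarrow> int" where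
  "tdeg dA dB p = dA (fst p) + dB (snd p)"

definition homog :: "('b \<Rightarrow> int) \<Rightarrow> int \<Rightarrow> 'b vec \<Rightarrow> bool" where
  "homog deg n x \<longleftrightarrow> (\<forall>k\<in>Poly_Mapping.keys x. deg k = n)"

definition tmul :: "('a \<Rightarrow> int) \<Rightarrow> ('b \<Rightarrow> int) \<Rightarrow> ('a \<Rightarrow> 'a \<Rightarrow> 'a vec) \<Rightarrow> ('b \<Rightarrow> 'b \<Rightarrow> 'b vec)
    \<Rightarrow> 'a \<times> 'b \<Rightarrow> 'a \<times> 'b \<Rightarrow> ('a \<times> 'b) vec" where
  "tmul dA dB mA mB p q =
     sc (ksign (dB (snd p) * dA (fst q))) (tens (mA (fst p) (fst q)) (mB (snd p) (snd q)))"

definition tdiff :: "('a \<Rightarrow> int) \<Rightarrow> ('a \<Rightarrow> 'a vec) \<Rightarrow> ('b \<Rightarrow> 'b vec) \<Rightarrow> 'a \<times> 'b \<Rightarrow> ('a \<times> 'b) vec" where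
  "tdiff dA DA DB p = tens (DA (fst p)) (bv (snd p)) + sc (ksign (dA (fst p))) (tens (bv (fst p)) (DB (snd p)))"

definition graded_algebra :: "('a \<Rightarrow> int) \<Rightarrow> ('a \<Rightarrow> 'a \<Rightarrow> 'a vec) \<Rightarrow> 'a vec \<Rightarrow> bool" where
  "graded_algebra deg m u \<longleftrightarrow>
     (\<forall>a b. homog deg (deg a + deg b) (m a b)) \<and> homog deg 0 u \<and>
     (\<forall>a b c. lin2 m (m a b) (bv c) = lin2 m (bv a) (m b c)) \<and>
     (\<forall>a. lin2 m u (bv a) = bv a \<and> lin2 m (bv a) u = bv a)"

definition graded_commutative :: "('a \<Rightarrow> int) \<Rightarrow> ('a \<Rightarrow> 'a \<Rightarrow> 'a vec) \<Rightarrow> bool" where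
  "graded_commutative deg m \<longleftrightarrow> (\<forall>a b. m a b = sc (ksign (deg a * deg b)) (m b a))"

definition is_differential :: "('a \<Rightarrow> int) \<Rightarrow> ('a \<Rightarrow> 'a vec) \<Rightarrow> bool" where
  "is_differential deg d \<longleftrightarrow> (\<forall>a. homog deg (deg a - 1) (d a)) \<and> (\<forall>a. lin d (d a) = 0)"

definition leibniz :: "('a \<Rightarrow> int) \<Rightarrow> ('a \<Rightarrow> 'a \<Rightarrow> 'a vec) \<Rightarrow> ('a \<Rightarrow> 'a vec) \<Rightarrow> bool" where
  "leibniz deg m d \<longleftrightarrow>
     (\<forall>a b. lin d (m a b) = lin2 m (d a) (bv b) + sc (ksign (deg a)) (lin2 m (bv a) (d b)))"

definition dg_algebra :: "('a \<Rightarrow> int) \<Rightarrow> ('a \<Rightarrow> 'a \<Rightarrow> 'a vec) \<Rightarrow> 'a vec \<Rightarrow> ('a \<Rightarrow> 'a vec) \<Rightarrow> bool" where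
  "dg_algebra deg m u d \<longleftrightarrow> graded_algebra deg m u \<and> is_differential deg d \<and> leibniz deg m d"

definition graded_coalgebra :: "('a \<Rightarrow> int) \<Rightarrow> ('a \<Rightarrow> ('a \<times> 'a) vec) \<Rightarrow> ('a \<Rightarrow> rat) \<Rightarrow> bool" where
  "graded_coalgebra deg cm e \<longleftrightarrow>
     (\<forall>c. homog (tdeg deg deg) (deg c) (cm c)) \<and> (\<forall>a. e a \<noteq> 0 \<longrightarrow> deg a = 0) \<and>
     (\<forall>c. lin (\<lambda>((a, b), k). bv (a, (b, k))) (lin (\<lambda>(a, b). tens (cm a) (bv b)) (cm c))
          = lin (\<lambda>(a, b). tens (bv a) (cm b)) (cm c)) \<and>
     (\<forall>c. lin (\<lambda>(a, b). sc (e a) (bv b)) (cm c) = bv c \<and>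
          lin (\<lambda>(a, b). sc (e b) (bv a)) (cm c) = bv c)"

definition cocommutative :: "('a \<Rightarrow> int) \<Rightarrow> ('a \<Rightarrow> ('a \<times> 'a) vec) \<Rightarrow> bool" where
  "cocommutative deg cm \<longleftrightarrow>
     (\<forall>c. lin (\<lambda>(a, b). sc (ksign (deg a * deg b)) (bv (b, a))) (cm c) = cm c)"

definition coderivation :: "('a \<Rightarrow> int) \<Rightarrow> ('a \<Rightarrow> ('a \<times> 'a) vec) \<Rightarrow> ('a \<Rightarrow> 'a vec) \<Rightarrow> bool" where
  "coderivation deg cm d \<longleftrightarrow> (\<forall>c. lin cm (d c) = lin (tdiff deg d d) (cm c))"

definition dg_coalgebra :: "('a \<Rightarrow> int) \<Rightarrow> ('a \<Rightarrow> ('a \<times> 'a) vec) \<Rightarrow> ('a \<Rightarrow> 'a vec) \<Rightarrow> bool" where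
  "dg_coalgebra deg cm d \<longleftrightarrow>
     (\<exists>e. graded_coalgebra deg cm e) \<and> is_differential deg d \<and> coderivation deg cm d"

definition dg_bialgebra :: "('a \<Rightarrow> int) \<Rightarrow> ('a \<Rightarrow> 'a \<Rightarrow> 'a vec) \<Rightarrow> 'a vec \<Rightarrow> ('a \<Rightarrow> 'a vec)
    \<Rightarrow> ('a \<Rightarrow> ('a \<times> 'a) vec) \<Rightarrow> ('a \<Rightarrow> rat) \<Rightarrow> bool" where
  "dg_bialgebra deg m u d cm e \<longleftrightarrow>
     dg_algebra deg m u d \<and> graded_coalgebra deg cm e \<and> coderivation deg cm d \<and>
     (\<forall>a. (\<Sum>k\<in>Poly_Mapping.keys (d a). Poly_Mapping.lookup (d a) k * e k) = 0) \<and>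
     (\<forall>a b. lin cm (m a b) = lin2 (tmul deg deg m m) (cm a) (cm b)) \<and>
     lin cm u = tens u u \<and>
     (\<forall>a b. (\<Sum>k\<in>Poly_Mapping.keys (m a b). Poly_Mapping.lookup (m a b) k * e k) = e a * e b) \<and>
     (\<Sum>k\<in>Poly_Mapping.keys u. Poly_Mapping.lookup u k * e k) = 1"

definition Prim :: "('a \<Rightarrow> ('a \<times> 'a) vec) \<Rightarrow> 'a vec \<Rightarrow> 'a vec set" where
  "Prim cm u = {h. lin cm h = tens h u + tens u h}"

definition ipl :: "('a \<Rightarrow> 'a \<Rightarrow> rat) \<Rightarrow> 'a vec \<Rightarrow> 'a vec \<Rightarrow> rat" where
  "ipl ip x y = (\<Sum>a\<in>Poly_Mapping.keys x. \<Sum>b\<in>Poly_Mapping.keys y. Poly_Mapping.lookup x a * Poly_Mapping.lookup y b * ip a b)"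

definition dg_frobenius :: "('a::finite \<Rightarrow> int) \<Rightarrow> ('a \<Rightarrow> 'a \<Rightarrow> 'a vec) \<Rightarrow> 'a vec \<Rightarrow> ('a \<Rightarrow> 'a vec)
    \<Rightarrow> ('a \<Rightarrow> 'a \<Rightarrow> rat) \<Rightarrow> bool" where
  "dg_frobenius deg m u d ip \<longleftrightarrow>
     dg_algebra deg m u d \<and> graded_commutative deg m \<and>
     (\<forall>a b c. ipl ip (bv a) (m b c) = ipl ip (m a b) (bv c)) \<and>
     (\<forall>x. (\<forall>y. ipl ip x y = 0) \<longrightarrow> x = 0)"

text \<open>the comultiplication induced by the inner product: \<langle>cm c, a\<otimes>b\<rangle> = \<langle>c, ab\<rangle>, where
  \<langle>x\<otimes>y, a\<otimes>b\<rangle> = (-1)^(|y||a|) \<langle>x,a\<rangle>\<langle>y,b\<rangle>\<close>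
definition induced_comult :: "('a \<Rightarrow> int) \<Rightarrow> ('a \<Rightarrow> 'a \<Rightarrow> 'a vec) \<Rightarrow> ('a \<Rightarrow> 'a \<Rightarrow> rat)
    \<Rightarrow> ('a \<Rightarrow> ('a \<times> 'a) vec) \<Rightarrow> bool" where
  "induced_comult deg m ip cm \<longleftrightarrow>
     (\<forall>c a b. (\<Sum>p\<in>Poly_Mapping.keys (cm c). Poly_Mapping.lookup (cm c) p * ksign (deg (snd p) * deg a) * ip (fst p) a * ip (snd p) b)
              = ipl ip (bv c) (m a b))"

definition twisting_cochain :: "('c \<Rightarrow> int) \<Rightarrow> ('c \<Rightarrow> ('c \<times> 'c) vec) \<Rightarrow> ('c \<Rightarrow> 'c vec)
    \<Rightarrow> ('h \<Rightarrow> int) \<Rightarrow> ('h \<Rightarrow> 'h \<Rightarrow> 'h vec) \<Rightarrow> ('h \<Rightarrow> 'h vec) \<Rightarrow> ('c \<Rightarrow> 'h vec) \<Rightarrow> bool" where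
  "twisting_cochain degC cmC dC degH mH dH \<tau> \<longleftrightarrow>
     (\<forall>c. homog degH (degC c - 1) (\<tau> c)) \<and>
     (\<forall>c. lin dH (\<tau> c) + lin \<tau> (dC c)
          + lin (\<lambda>(a, b). sc (ksign (degC a)) (lin2 mH (\<tau> a) (\<tau> b))) (cmC c) = 0)"

definition gbracket :: "('h \<Rightarrow> int) \<Rightarrow> ('h \<Rightarrow> 'h \<Rightarrow> 'h vec) \<Rightarrow> 'h vec \<Rightarrow> 'h \<Rightarrow> 'h vec" where
  "gbracket deg m x h = lin (\<lambda>k. m k h - sc (ksign (deg k * deg h)) (m h k)) x"

definition twisted_diff :: "('c \<Rightarrow> int) \<Rightarrow> ('c \<Rightarrow> ('c \<times> 'c) vec) \<Rightarrow> ('c \<Rightarrow> 'c vec)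
    \<Rightarrow> ('h \<Rightarrow> int) \<Rightarrow> ('h \<Rightarrow> 'h \<Rightarrow> 'h vec) \<Rightarrow> ('h \<Rightarrow> 'h vec) \<Rightarrow> ('c \<Rightarrow> 'h vec)
    \<Rightarrow> 'c \<times> 'h \<Rightarrow> ('c \<times> 'h) vec" where
  "twisted_diff degC cmC dC degH mH dH \<tau> p =
     tdiff degC dC dH p +
     lin (\<lambda>(a, b). sc (ksign (degC a)) (tens (bv a) (gbracket degH mH (\<tau> b) (snd p)))) (cmC (fst p))"

end

theory Submission
  imports Defs
begin

text \<open>
  Write the twisted differential as \<open>\<partial>\<^sub>\<tau> = \<partial>\<otimes>1 + 1\<otimes>\<partial> + t\<close> with
  \<open>t(c\<otimes>h) = \<Sum> \<plusminus> c\<^sub>1 \<otimes> [\<tau>(c\<^sub>2), h]\<close>.  The Leibniz rule for \<open>t\<close> rests on two facts: the graded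
  commutator with a homogeneous element is a derivation, and in a Frobenius algebra the induced
  comultiplication is a bimodule map, \<open>\<Delta>(c c') = c \<Delta>(c') = \<Delta>(c) c'\<close>.  For \<open>\<partial>\<^sub>\<tau>\<^sup>2 = 0\<close>, the mixed
  terms \<open>(\<partial>\<otimes>1 + 1\<otimes>\<partial>) t + t (\<partial>\<otimes>1 + 1\<otimes>\<partial>)\<close> give \<open>-[\<tau>\<union>\<tau>, h]\<close> by the twisting cochain equation, while
  coassociativity turns \<open>t\<^sup>2\<close> into \<open>\<Sum> \<plusminus>[\<tau>(c\<^sub>1), [\<tau>(c\<^sub>2), h]]\<close>, which equals \<open>[\<tau>\<union>\<tau>, h]\<close> by
  cocommutativity and the graded Jacobi identity.
\<close>

abbreviation lookup :: "('a \<Rightarrow>\<^sub>0 'b::zero) \<Rightarrow> 'a \<Rightarrow> 'b" where "lookup \<equiv> Poly_Mapping.lookup"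
abbreviation keys :: "('a \<Rightarrow>\<^sub>0 'b::zero) \<Rightarrow> 'a set" where "keys \<equiv> Poly_Mapping.keys"

lemma lookup_sc[simp]: "lookup (sc c x) k = c * lookup x k"
  unfolding sc_def by transfer (auto simp: when_def)

lemma lookup_bv: "lookup (bv a) k = (if k = a then 1 else 0)"
  unfolding bv_def by (simp add: lookup_single)

lemma keys_bv[simp]: "keys (bv a) = {a}"
  unfolding bv_def by simp

lemma keys_sc: "keys (sc c x) \<subseteq> keys x"
  by (auto simp: in_keys_iff)

lemma sc_add_right: "sc c (x + y) = sc c x + sc c y"
  by (rule poly_mapping_eqI) (simp add: lookup_add algebra_simps)

lemma sc_add_left: "sc (c + d) x = sc c x + sc d x"
  by (rule poly_mapping_eqI) (simp add: lookup_add algebra_simps)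

lemma sc_sc[simp]: "sc c (sc d x) = sc (c * d) x"
  by (rule poly_mapping_eqI) simp

lemma sc_one[simp]: "sc 1 x = x"
  by (rule poly_mapping_eqI) simp

lemma sc_zero_left[simp]: "sc 0 x = 0"
  by (rule poly_mapping_eqI) simp

lemma sc_zero_right[simp]: "sc c 0 = 0"
  by (rule poly_mapping_eqI) simp

lemma sc_minus_right: "sc c (- x) = - sc c x"
  by (rule poly_mapping_eqI) simp

lemma sc_minus_left: "sc (- c) x = - sc c x"
  by (rule poly_mapping_eqI) simp

lemma sc_diff_right: "sc c (x - y) = sc c x - sc c y"
  by (rule poly_mapping_eqI) (simp add: lookup_minus algebra_simps)

lemma sc_sum: "sc c (sum f S) = (\<Sum>i\<in>S. sc c (f i))"
  by (induction S rule: infinite_finite_induct) (auto simp: sc_add_right)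

lemma sc_minus_one: "sc (-1) x = - x"
  by (rule poly_mapping_eqI) simp

lemma lin_superset:
  assumes "finite S" "keys x \<subseteq> S"
  shows "lin f x = (\<Sum>a\<in>S. sc (lookup x a) (f a))"
  unfolding lin_def
  by (rule sum.mono_neutral_left) (use assms in \<open>auto simp: in_keys_iff\<close>)

lemma lin_add: "lin f (x + y) = lin f x + lin f y"
proof -
  have S: "keys (x+y) \<subseteq> keys x \<union> keys y" by (rule keys_add)
  show ?thesis
    by (subst (1 2 3) lin_superset[where S="keys x \<union> keys y"])
       (use S in \<open>auto simp: lookup_add sc_add_left sum.distrib\<close>)
qed

lemma lin_sc: "lin f (sc c x) = sc c (lin f x)"
  by (subst (1 2) lin_superset[where S="keys x"]) (use keys_sc[of c x] in \<open>auto simp: sc_sum\<close>)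

lemma lin_zero[simp]: "lin f 0 = 0"
  by (simp add: lin_def)

lemma lin_bv[simp]: "lin f (bv a) = f a"
  by (simp add: lin_def lookup_bv)

lemma lin_minus: "lin f (- x) = - lin f x"
  using lin_sc[of f "-1" x] by (simp add: sc_minus_one)

lemma lin_diff: "lin f (x - y) = lin f x - lin f y"
  using lin_add[of f x "-y"] by (simp add: lin_minus)

lemma lin_sum: "lin f (sum g S) = (\<Sum>i\<in>S. lin f (g i))"
  by (induction S rule: infinite_finite_induct) (auto simp: lin_add)

lemma lin_cong: "(\<And>a. a \<in> keys x \<Longrightarrow> f a = g a) \<Longrightarrow> lin f x = lin g x"
  by (simp add: lin_def)

lemma lin_add_fun: "lin (\<lambda>a. f a + g a) x = lin f x + lin g x"
  by (simp add: lin_def sc_add_right sum.distrib)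

lemma lin_sc_fun: "lin (\<lambda>a. sc c (f a)) x = sc c (lin f x)"
  by (simp add: lin_def sc_sum mult.commute)

lemma lin_zero_fun[simp]: "lin (\<lambda>a. 0) x = 0"
  by (simp add: lin_def)

lemma lin_minus_fun: "lin (\<lambda>a. - f a) x = - lin f x"
  by (simp add: lin_def sc_minus_right sum_negf)

lemma lin_diff_fun: "lin (\<lambda>a. f a - g a) x = lin f x - lin g x"
  using lin_add_fun[of f "\<lambda>a. - g a" x] by (simp add: lin_minus_fun)

lemma lin_lin: "lin g (lin f x) = lin (\<lambda>a. lin g (f a)) x"
proof -
  have "lin g (lin f x) = lin g (\<Sum>a\<in>keys x. sc (lookup x a) (f a))" by (simp add: lin_def[of f])
  also have "\<dots> = (\<Sum>a\<in>keys x. sc (lookup x a) (lin g (f a)))" by (simp add: lin_sum lin_sc)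
  finally show ?thesis by (simp add: lin_def[of _ x])
qed

lemma lin_bv_self[simp]: "lin bv x = x"
proof (rule poly_mapping_eqI)
  fix k
  have "lookup (lin bv x) k = (\<Sum>xa\<in>keys x. if xa = k then lookup x xa else 0)"
    unfolding lin_def lookup_sum by (rule sum.cong) (auto simp: lookup_bv)
  also have "\<dots> = lookup x k" by (simp add: in_keys_iff)
  finally show "lookup (lin bv x) k = lookup x k" .
qed

lemma lin2_lin: "lin2 f x y = lin (\<lambda>a. lin (\<lambda>b. f a b) y) x"
  by (simp add: lin2_def lin_def sc_sum mult.commute)

lemma lin2_lin_swap: "lin2 f x y = lin (\<lambda>b. lin (\<lambda>a. f a b) x) y"
  by (simp add: lin2_def lin_def sc_sum mult.commute sum.swap[of _ "keys x"])

lemma lin2_bv_left[simp]: "lin2 f (bv a) y = lin (f a) y"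
  by (simp add: lin2_lin)

lemma lin2_bv_right[simp]: "lin2 f x (bv b) = lin (\<lambda>a. f a b) x"
  by (simp add: lin2_lin)

lemma tens_eq_lin: "tens x y = lin (\<lambda>a. lin (\<lambda>b. bv (a, b)) y) x"
  by (simp add: tens_def lin2_lin)

lemma tens_bv[simp]: "tens (bv a) (bv b) = bv (a, b)"
  by (simp add: tens_eq_lin)

lemma ksign_add: "ksign (a + b) = ksign a * ksign b"
  by (auto simp: ksign_def)

lemma ksign_eq_iff: "ksign a = ksign b \<longleftrightarrow> even (a - b)"
  by (auto simp: ksign_def)

lemma ksign_sq[simp]: "ksign a * ksign a = 1"
  by (auto simp: ksign_def)

lemma ksign_0[simp]: "ksign 0 = 1" by (simp add: ksign_def)

lemma ksign_nz[simp]: "ksign a \<noteq> 0" by (simp add: ksign_def)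

lemma ksign_mult_eq: "even (a + b - c) \<Longrightarrow> ksign a * ksign b = ksign c"
  by (auto simp: ksign_def)

lemma ksign_mult_eq2: "even (a + b - c - d) \<Longrightarrow> ksign a * ksign b = ksign c * ksign d"
  by (auto simp: ksign_def)

lemma ksign_neg_iff: "ksign a = - ksign b \<longleftrightarrow> odd (a - b)"
  by (auto simp: ksign_def)

lemma keys_sum_subset: "keys (sum f S) \<subseteq> (\<Union>i\<in>S. keys (f i))"
proof (induction S rule: infinite_finite_induct)
  case (insert x F)
  then show ?case using keys_add[of "f x" "sum f F"] by auto
qed auto

lemma keys_lin_subset: "keys (lin f x) \<subseteq> (\<Union>a\<in>keys x. keys (f a))"
  unfolding lin_def using keys_sum_subset keys_sc by fastforce

lemma homog_lin: "(\<And>a. a \<in> keys x \<Longrightarrow> homog deg n (f a)) \<Longrightarrow> homog deg n (lin f x)"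
  unfolding homog_def using keys_lin_subset by fastforce

lemma homog_add: "homog deg n x \<Longrightarrow> homog deg n y \<Longrightarrow> homog deg n (x + y)"
  unfolding homog_def using keys_add by fastforce

lemma homog_sc: "homog deg n x \<Longrightarrow> homog deg n (sc c x)"
  unfolding homog_def using keys_sc by fastforce

lemma homog_minus: "homog deg n x \<Longrightarrow> homog deg n (- x)"
  unfolding homog_def by simp

lemma homog_diff: "homog deg n x \<Longrightarrow> homog deg n y \<Longrightarrow> homog deg n (x - y)"
  using homog_add[of deg n x "-y"] homog_minus by fastforce

lemma homog_bv[simp]: "homog deg n (bv a) \<longleftrightarrow> deg a = n"
  unfolding homog_def by simp

lemma homogD: "homog deg n x \<Longrightarrow> a \<in> keys x \<Longrightarrow> deg a = n"
  unfolding homog_def by simp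

lemma lin_swap: "lin (\<lambda>a. lin (\<lambda>b. F a b) y) x = lin (\<lambda>b. lin (\<lambda>a. F a b) x) y"
  using lin2_lin[of F x y] lin2_lin_swap[of F x y] by simp

lemma tens_lin_left: "tens (lin f x) y = lin (\<lambda>a. tens (f a) y) x"
  by (simp add: tens_eq_lin lin_lin)

lemma tens_lin_right: "tens x (lin g y) = lin (\<lambda>b. tens x (g b)) y"
proof -
  have "tens x (lin g y) = lin (\<lambda>a. lin (\<lambda>b. tens (bv a) (g b)) y) x"
    by (simp add: tens_eq_lin lin_lin)
  also have "\<dots> = lin (\<lambda>b. lin (\<lambda>a. tens (bv a) (g b)) x) y" by (rule lin_swap)
  also have "\<dots> = lin (\<lambda>b. tens x (g b)) y"
    by (simp add: tens_lin_left[symmetric])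
  finally show ?thesis .
qed

lemma tens_add_left: "tens (x + y) z = tens x z + tens y z"
  by (simp add: tens_eq_lin lin_add)

lemma tens_add_right: "tens z (x + y) = tens z x + tens z y"
  by (simp add: tens_eq_lin lin_add lin_add_fun)

lemma tens_sc_left: "tens (sc c x) z = sc c (tens x z)"
  by (simp add: tens_eq_lin lin_sc)

lemma tens_sc_right: "tens z (sc c x) = sc c (tens z x)"
  by (simp add: tens_eq_lin lin_sc lin_sc_fun)

lemma tens_minus_right: "tens z (- x) = - tens z x"
  by (simp add: tens_eq_lin lin_minus lin_minus_fun)

lemma tens_diff_right: "tens z (x - y) = tens z x - tens z y"
  by (simp add: tens_eq_lin lin_diff lin_diff_fun)

lemma tens_zero_left[simp]: "tens 0 z = 0" by (simp add: tens_eq_lin)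

lemma tens_zero_right[simp]: "tens z 0 = 0" by (simp add: tens_eq_lin)

lemma lin_tens: "lin F (tens x y) = lin (\<lambda>a. lin (\<lambda>b. F (a, b)) y) x"
  by (simp add: tens_eq_lin lin_lin)

lemma homog_tens: "homog dA n x \<Longrightarrow> homog dB m y \<Longrightarrow> homog (tdeg dA dB) (n + m) (tens x y)"
  unfolding tens_eq_lin by (intro homog_lin) (auto simp: homogD tdeg_def)

lemma vec_eq_uminus_self: "(x :: 'a vec) = - x \<Longrightarrow> x = 0"
proof -
  assume a: "x = - x"
  show "x = 0"
  proof (rule poly_mapping_eqI)
    fix k have "lookup x k = - lookup x k" using arg_cong[OF a, of "\<lambda>v. lookup v k"] by simp
    then show "lookup x k = lookup 0 k" by simp
  qed
qed

lemma lin_case_tens_bv: "lin (\<lambda>(a, b). F a b) (tens X (bv l)) = lin (\<lambda>a. F a l) X"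
  by (simp add: lin_tens)

lemma lin_ksign_tens_bv: "homog deg n X \<Longrightarrow> lin (\<lambda>a. sc (ksign (deg a) * e) (tens (bv a) Z)) X = sc (ksign n * e) (tens X Z)"
proof -
  assume hX: "homog deg n X"
  have "lin (\<lambda>a. sc (ksign (deg a) * e) (tens (bv a) Z)) X = lin (\<lambda>a. sc (ksign n * e) (tens (bv a) Z)) X"
    by (rule lin_cong) (simp add: homogD[OF hX])
  also have "\<dots> = sc (ksign n * e) (tens X Z)"
    by (simp only: lin_sc_fun tens_lin_left[symmetric] lin_bv_self)
  finally show ?thesis .
qed

lemma lin_ksign_tens_bv1: "homog deg n X \<Longrightarrow> lin (\<lambda>a. sc (ksign (deg a)) (tens (bv a) Z)) X = sc (ksign n) (tens X Z)"
  using lin_ksign_tens_bv[of deg n X 1 Z] by simp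

section \<open>Tensor products of graded algebras\<close>

lemma tmul_pair: "tmul dA dB mA mB (a, b) (c, d) = sc (ksign (dB b * dA c)) (tens (mA a c) (mB b d))"
  by (simp add: tmul_def)

lemma lin_tmul_right:
  assumes "homog dB n Y"
  shows "lin (\<lambda>k. lin (\<lambda>l. tmul dA dB mA mB (k, l) (e, f)) Y) X
         = sc (ksign (n * dA e)) (tens (lin2 mA X (bv e)) (lin2 mB Y (bv f)))"
proof -
  have "lin (\<lambda>k. lin (\<lambda>l. tmul dA dB mA mB (k, l) (e, f)) Y) X
      = lin (\<lambda>k. lin (\<lambda>l. sc (ksign (n * dA e)) (tens (mA k e) (mB l f))) Y) X"
    by (intro lin_cong) (use assms in \<open>auto simp: tmul_pair homogD\<close>)
  also have "\<dots> = sc (ksign (n * dA e)) (tens (lin2 mA X (bv e)) (lin2 mB Y (bv f)))"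
    by (simp add: lin_sc_fun tens_lin_left tens_lin_right) (rule arg_cong[where f="sc _"], rule lin_swap)
  finally show ?thesis .
qed

lemma lin_tmul_left:
  assumes "homog dA n X"
  shows "lin (\<lambda>k. lin (\<lambda>l. tmul dA dB mA mB (a, b) (k, l)) Y) X
         = sc (ksign (dB b * n)) (tens (lin2 mA (bv a) X) (lin2 mB (bv b) Y))"
proof -
  have "lin (\<lambda>k. lin (\<lambda>l. tmul dA dB mA mB (a, b) (k, l)) Y) X
      = lin (\<lambda>k. lin (\<lambda>l. sc (ksign (dB b * n)) (tens (mA a k) (mB b l))) Y) X"
    by (intro lin_cong) (use assms in \<open>auto simp: tmul_pair homogD\<close>)
  also have "\<dots> = sc (ksign (dB b * n)) (tens (lin2 mA (bv a) X) (lin2 mB (bv b) Y))"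
    by (simp add: lin_sc_fun tens_lin_left tens_lin_right) (rule arg_cong[where f="sc _"], rule lin_swap)
  finally show ?thesis .
qed

lemma tmul_assoc:
  assumes hA: "\<And>a b. homog dA (dA a + dA b) (mA a b)" and hB: "\<And>a b. homog dB (dB a + dB b) (mB a b)"
    and asA: "\<And>a b c. lin2 mA (mA a b) (bv c) = lin2 mA (bv a) (mA b c)"
    and asB: "\<And>a b c. lin2 mB (mB a b) (bv c) = lin2 mB (bv a) (mB b c)"
  shows "lin2 (tmul dA dB mA mB) (tmul dA dB mA mB p q) (bv r)
       = lin2 (tmul dA dB mA mB) (bv p) (tmul dA dB mA mB q r)"
proof -
  let ?m = "tmul dA dB mA mB"
  obtain a b c d e f where pqr: "p = (a, b)" "q = (c, d)" "r = (e, f)" by (metis surj_pair)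
  let ?abc = "tens (lin2 mA (bv a) (mA c e)) (lin2 mB (bv b) (mB d f))"
  have "lin2 ?m (?m p q) (bv r) = sc (ksign (dB b * dA c)) (lin (\<lambda>s. ?m s (e, f)) (tens (mA a c) (mB b d)))"
    by (simp add: pqr tmul_pair lin_sc)
  also have "\<dots> = sc (ksign (dB b * dA c)) (sc (ksign ((dB b + dB d) * dA e))
       (tens (lin2 mA (mA a c) (bv e)) (lin2 mB (mB b d) (bv f))))"
    by (simp add: lin_tens lin_tmul_right[OF hB])
  also have "\<dots> = sc (ksign (dB b * dA c) * ksign ((dB b + dB d) * dA e)) ?abc"
    using asA[of a c e] asB[of b d f] by simp
  also have "ksign (dB b * dA c) * ksign ((dB b + dB d) * dA e) = ksign (dB d * dA e) * ksign (dB b * (dA c + dA e))"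
    by (simp add: ksign_add[symmetric] algebra_simps)
  also have "sc \<dots> ?abc = sc (ksign (dB d * dA e)) (sc (ksign (dB b * (dA c + dA e))) ?abc)"
    by simp
  also have "\<dots> = sc (ksign (dB d * dA e)) (lin (\<lambda>s. ?m (a, b) s) (tens (mA c e) (mB d f)))"
    by (simp add: lin_tens lin_tmul_left[OF hA])
  also have "\<dots> = lin2 ?m (bv p) (?m q r)"
    by (simp add: pqr tmul_pair lin_sc)
  finally show ?thesis .
qed

lemma lin_tmul_bv_left:
  "lin (\<lambda>l. tmul dA dB mA mB (a, b) (k, l)) Y = sc (ksign (dB b * dA k)) (tens (mA a k) (lin (mB b) Y))"
  using lin_tmul_left[where X="bv k" and n="dA k" and dA=dA and dB=dB and mA=mA and mB=mB and a=a and b=b and Y=Y]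
  by simp

lemma tensor_graded_algebra:
  assumes A: "graded_algebra dA mA uA" and B: "graded_algebra dB mB uB"
  shows "graded_algebra (tdeg dA dB) (tmul dA dB mA mB) (tens uA uB)"
proof -
  have hA: "\<And>a b. homog dA (dA a + dA b) (mA a b)" and hB: "\<And>a b. homog dB (dB a + dB b) (mB a b)"
    and uA0: "homog dA 0 uA" and uB0: "homog dB 0 uB"
    and asA: "\<And>a b c. lin2 mA (mA a b) (bv c) = lin2 mA (bv a) (mA b c)"
    and asB: "\<And>a b c. lin2 mB (mB a b) (bv c) = lin2 mB (bv a) (mB b c)"
    and unA: "\<And>a. lin2 mA uA (bv a) = bv a \<and> lin2 mA (bv a) uA = bv a"
    and unB: "\<And>a. lin2 mB uB (bv a) = bv a \<and> lin2 mB (bv a) uB = bv a"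
    using A B unfolding graded_algebra_def by auto
  let ?m = "tmul dA dB mA mB"
  have hom: "homog (tdeg dA dB) (tdeg dA dB p + tdeg dA dB q) (?m p q)" for p q
  proof -
    obtain a b c d where pq: "p = (a, b)" "q = (c, d)" by fastforce
    show ?thesis unfolding pq tmul_pair
      using homog_tens[OF hA[of a c] hB[of b d]]
      by (intro homog_sc) (simp add: tdeg_def algebra_simps)
  qed
  have unit: "lin2 ?m (tens uA uB) (bv p) = bv p \<and> lin2 ?m (bv p) (tens uA uB) = bv p" for p
  proof -
    obtain e f where p: "p = (e, f)" by fastforce
    show ?thesis
      using unA[of e] unB[of f] by (simp add: p lin_tens lin_tmul_right[OF uB0] lin_tmul_left[OF uA0])
  qed
  have "homog (tdeg dA dB) 0 (tens uA uB)" using homog_tens[OF uA0 uB0] by simp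
  then show ?thesis
    unfolding graded_algebra_def using hom tmul_assoc[OF hA hB asA asB] unit by blast
qed

section \<open>Graded commutators\<close>

locale graded_alg =
  fixes deg :: "'h \<Rightarrow> int" and m :: "'h \<Rightarrow> 'h \<Rightarrow> 'h vec" and u :: "'h vec"
  assumes graded: "graded_algebra deg m u"
begin

abbreviation br :: "'h vec \<Rightarrow> 'h \<Rightarrow> 'h vec" where "br \<equiv> gbracket deg m"

lemma mult_homog: "homog deg (deg a + deg b) (m a b)"
  using graded unfolding graded_algebra_def by blast

lemma mult_lin_assoc: "lin (\<lambda>x. m x c) (m a b) = lin (m a) (m b c)"
  using graded unfolding graded_algebra_def by simp

lemma br_bv: "br (bv k) h = m k h - sc (ksign (deg k * deg h)) (m h k)"
  by (simp add: gbracket_def)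

lemma br_lin: "br (lin f x) h = lin (\<lambda>a. br (f a) h) x"
  by (simp add: gbracket_def lin_lin)

lemma homog_br: "homog deg n x \<Longrightarrow> homog deg (n + deg h) (br x h)"
  unfolding gbracket_def
proof (rule homog_lin)
  fix a assume "homog deg n x" "a \<in> keys x"
  then have a: "deg a = n" by (rule homogD)
  have 1: "homog deg (n + deg h) (m a h)" using mult_homog[of a h] a by simp
  have 2: "homog deg (n + deg h) (m h a)" using mult_homog[of h a] a by (simp add: add.commute)
  show "homog deg (n + deg h) (m a h - sc (ksign (deg a * deg h)) (m h a))"
    by (rule homog_diff[OF 1 homog_sc[OF 2]])
qed

lemma br_expand: "br x h = lin (\<lambda>k. br (bv k) h) x"
  using br_lin[of bv x h] by simp

lemma lin_br_expand: "lin (br x) Y = lin (\<lambda>k. lin (br (bv k)) Y) x"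
proof -
  have "lin (br x) Y = lin (\<lambda>y. lin (\<lambda>k. br (bv k) y) x) Y"
    by (rule lin_cong) (rule br_expand)
  also have "\<dots> = lin (\<lambda>k. lin (br (bv k)) Y) x" by (rule lin_swap[symmetric])
  finally show ?thesis .
qed

lemma br_bv_derivation:
  "lin (br (bv k)) (m h h') = lin (\<lambda>y. m y h') (br (bv k) h) + sc (ksign (deg k * deg h)) (lin (m h) (br (bv k) h'))"
proof -
  have "lin (br (bv k)) (m h h') = lin (\<lambda>l. m k l - sc (ksign (deg k * (deg h + deg h'))) (m l k)) (m h h')"
    by (rule lin_cong) (simp add: br_bv homogD[OF mult_homog])
  also have "\<dots> = lin (\<lambda>y. m y h') (m k h) - sc (ksign (deg k * (deg h + deg h'))) (lin (m h) (m h' k))"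
    by (simp only: lin_diff_fun lin_sc_fun mult_lin_assoc)
  also have "\<dots> = lin (\<lambda>y. m y h') (m k h - sc (ksign (deg k * deg h)) (m h k))
       + sc (ksign (deg k * deg h)) (lin (m h) (m k h' - sc (ksign (deg k * deg h')) (m h' k)))"
  proof -
    have "lin (\<lambda>y. m y h') (m h k) = lin (m h) (m k h')" by (rule mult_lin_assoc)
    moreover have "ksign (deg k * (deg h + deg h')) = ksign (deg k * deg h) * ksign (deg k * deg h')"
      by (simp add: distrib_left ksign_add)
    ultimately show ?thesis
      by (simp add: lin_diff lin_sc sc_diff_right)
  qed
  finally show ?thesis by (simp only: br_bv)
qed

lemma br_derivation:
  assumes hx: "homog deg n x"
  shows "lin (br x) (m h h') = lin (\<lambda>y. m y h') (br x h) + sc (ksign (n * deg h)) (lin (m h) (br x h'))"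
proof -
  have "lin (br x) (m h h') = lin (\<lambda>k. lin (br (bv k)) (m h h')) x"
    by (rule lin_br_expand)
  also have "\<dots> = lin (\<lambda>k. lin (\<lambda>y. m y h') (br (bv k) h) + sc (ksign (n * deg h)) (lin (m h) (br (bv k) h'))) x"
    by (rule lin_cong) (simp add: br_bv_derivation homogD[OF hx])
  also have "\<dots> = lin (\<lambda>y. m y h') (br x h) + sc (ksign (n * deg h)) (lin (m h) (br x h'))"
    by (simp only: lin_add_fun lin_sc_fun lin_lin br_expand[of x] lin_br_expand[of x])
  finally show ?thesis .
qed

definition triple :: "'h \<Rightarrow> 'h \<Rightarrow> 'h \<Rightarrow> 'h vec" where
  "triple x y z = lin (\<lambda>w. m w z) (m x y)"

lemma triple_assoc: "lin (m x) (m y z) = triple x y z"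
  by (simp add: triple_def mult_lin_assoc)

lemma lin_br_bv_mult: "lin (br (bv k)) (m l h) = triple k l h - sc (ksign (deg k * (deg l + deg h))) (triple l h k)"
proof -
  have "lin (br (bv k)) (m l h) = lin (\<lambda>y. m k y - sc (ksign (deg k * (deg l + deg h))) (m y k)) (m l h)"
    by (rule lin_cong) (simp add: br_bv homogD[OF mult_homog])
  then show ?thesis by (simp add: lin_diff_fun lin_sc_fun triple_assoc triple_def)
qed

lemma br_mult_bv: "br (m k l) h = triple k l h - sc (ksign ((deg k + deg l) * deg h)) (triple h k l)"
proof -
  have "br (m k l) h = lin (\<lambda>y. m y h - sc (ksign ((deg k + deg l) * deg h)) (m h y)) (m k l)"
    unfolding gbracket_def by (rule lin_cong) (simp add: homogD[OF mult_homog])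
  then show ?thesis by (simp add: lin_diff_fun lin_sc_fun triple_assoc triple_def)
qed

definition jacobiator :: "'h \<Rightarrow> 'h \<Rightarrow> 'h \<Rightarrow> 'h vec" where
  "jacobiator h k l = lin (br (bv k)) (br (bv l) h) - br (m k l) h"

lemma jacobiator_expand: "jacobiator h k l = sc (- ksign (deg l * deg h)) (triple k h l) + sc (- ksign (deg k * (deg l + deg h))) (triple l h k)
   + sc (ksign (deg l * deg h + deg k * (deg h + deg l))) (triple h l k) + sc (ksign ((deg k + deg l) * deg h)) (triple h k l)"
proof -
  have "jacobiator h k l = (triple k l h - sc (ksign (deg k * (deg l + deg h))) (triple l h k))
      - sc (ksign (deg l * deg h)) (triple k h l - sc (ksign (deg k * (deg h + deg l))) (triple h l k))
      - (triple k l h - sc (ksign ((deg k + deg l) * deg h)) (triple h k l))"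
    unfolding jacobiator_def br_bv lin_diff lin_sc lin_br_bv_mult br_mult_bv ..
  also have "\<dots> = sc (- ksign (deg l * deg h)) (triple k h l) + sc (- ksign (deg k * (deg l + deg h))) (triple l h k)
   + sc (ksign (deg l * deg h) * ksign (deg k * (deg h + deg l))) (triple h l k) + sc (ksign ((deg k + deg l) * deg h)) (triple h k l)"
    by (simp add: sc_diff_right sc_minus_left algebra_simps)
  also have "ksign (deg l * deg h) * ksign (deg k * (deg h + deg l)) = ksign (deg l * deg h + deg k * (deg h + deg l))"
    by (simp add: ksign_add)
  finally show ?thesis .
qed

lemma jacobiator_swap: "jacobiator h k l = sc (ksign (deg k * deg l)) (jacobiator h l k)"
proof -
  have e1: "ksign (deg k * deg l) * - ksign (deg k * deg h) = - ksign (deg k * (deg l + deg h))"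
    by (simp add: distrib_left ksign_add)
  have e2: "ksign (deg k * deg l) * - ksign (deg l * (deg k + deg h)) = - ksign (deg l * deg h)"
  proof -
    have "ksign (deg k * deg l) * ksign (deg l * (deg k + deg h)) = ksign (deg l * deg h)"
      by (rule ksign_mult_eq) (simp add: algebra_simps)
    then show ?thesis by simp
  qed
  have e3: "ksign (deg k * deg l) * ksign (deg k * deg h + deg l * (deg h + deg k)) = ksign ((deg k + deg l) * deg h)"
    by (rule ksign_mult_eq) (simp add: algebra_simps)
  have e4: "ksign (deg k * deg l) * ksign ((deg l + deg k) * deg h) = ksign (deg l * deg h + deg k * (deg h + deg l))"
    by (rule ksign_mult_eq) (simp add: algebra_simps)
  show ?thesis unfolding jacobiator_expand[of h k l] jacobiator_expand[of h l k] sc_add_right sc_sc e1 e2 e3 e4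
    by (simp only: add_ac)
qed

lemma br_add: "br (x + y) h = br x h + br y h"
  by (simp add: gbracket_def lin_add)

lemma br_minus: "br (- x) h = - br x h"
  by (simp add: gbracket_def lin_minus)

lemma br_sc: "br (sc s x) h = sc s (br x h)"
  by (simp add: gbracket_def lin_sc)

end

locale dg_alg =
  fixes deg :: "'h \<Rightarrow> int" and m :: "'h \<Rightarrow> 'h \<Rightarrow> 'h vec" and u :: "'h vec" and d :: "'h \<Rightarrow> 'h vec"
  assumes dg: "dg_algebra deg m u d"

sublocale dg_alg \<subseteq> graded_alg deg m u
  using dg unfolding dg_algebra_def by unfold_locales blast

context dg_alg
begin

lemma diff_homog: "homog deg (deg a - 1) (d a)"
  using dg unfolding dg_algebra_def is_differential_def by blast

lemma diff_diff_zero: "lin d (d a) = 0"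
  using dg unfolding dg_algebra_def is_differential_def by blast

lemma diff_mult_leibniz: "lin d (m a b) = lin (\<lambda>x. m x b) (d a) + sc (ksign (deg a)) (lin (m a) (d b))"
  using dg unfolding dg_algebra_def leibniz_def by simp

lemma diff_br_bv: "lin d (br (bv k) h) = br (d k) h + sc (ksign (deg k)) (lin (br (bv k)) (d h))"
proof -
  let ?n = "deg k"
  have g1: "br (d k) h = lin (\<lambda>y. m y h) (d k) - sc (ksign ((?n - 1) * deg h)) (lin (m h) (d k))"
  proof -
    have "br (d k) h = lin (\<lambda>y. m y h - sc (ksign ((?n - 1) * deg h)) (m h y)) (d k)"
      unfolding gbracket_def by (rule lin_cong) (simp add: homogD[OF diff_homog])
    then show ?thesis by (simp only: lin_diff_fun lin_sc_fun)
  qed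
  have g2: "lin (br (bv k)) (d h) = lin (m k) (d h) - sc (ksign (?n * (deg h - 1))) (lin (\<lambda>y. m y k) (d h))"
  proof -
    have "lin (br (bv k)) (d h) = lin (\<lambda>y. m k y - sc (ksign (?n * (deg h - 1))) (m y k)) (d h)"
      by (rule lin_cong) (simp add: br_bv homogD[OF diff_homog])
    then show ?thesis by (simp only: lin_diff_fun lin_sc_fun)
  qed
  have "lin d (br (bv k) h) = (lin (\<lambda>y. m y h) (d k) + sc (ksign ?n) (lin (m k) (d h)))
       - sc (ksign (?n * deg h)) (lin (\<lambda>y. m y k) (d h) + sc (ksign (deg h)) (lin (m h) (d k)))"
    unfolding br_bv lin_diff lin_sc diff_mult_leibniz ..
  also have "\<dots> = lin (\<lambda>y. m y h) (d k) - sc (ksign ((?n - 1) * deg h)) (lin (m h) (d k))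
      + sc (ksign ?n) (lin (m k) (d h) - sc (ksign (?n * (deg h - 1))) (lin (\<lambda>y. m y k) (d h)))"
  proof -
    have e1: "ksign (?n * deg h) * ksign (deg h) = ksign ((?n - 1) * deg h)"
      by (rule ksign_mult_eq) (simp add: algebra_simps)
    have e2: "ksign ?n * ksign (?n * (deg h - 1)) = ksign (?n * deg h)"
      by (rule ksign_mult_eq) (simp add: algebra_simps)
    show ?thesis unfolding sc_add_right sc_diff_right sc_sc e1 e2 by (simp add: algebra_simps)
  qed
  finally show ?thesis unfolding g1 g2 .
qed

lemma diff_br: "homog deg n x \<Longrightarrow> lin d (br x h) = br (lin d x) h + sc (ksign n) (lin (br x) (d h))"
proof -
  assume hx: "homog deg n x"
  have "lin d (br x h) = lin (\<lambda>k. lin d (br (bv k) h)) x"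
    unfolding br_expand[of x] lin_lin ..
  also have "\<dots> = lin (\<lambda>k. br (d k) h + sc (ksign n) (lin (br (bv k)) (d h))) x"
    by (rule lin_cong) (simp add: diff_br_bv homogD[OF hx])
  also have "\<dots> = br (lin d x) h + sc (ksign n) (lin (br x) (d h))"
    unfolding lin_add_fun lin_sc_fun br_lin lin_br_expand[of x] ..
  finally show ?thesis .
qed

end

section \<open>Frobenius algebras\<close>

lemma lin_univ: "lin f (x :: ('a::finite) vec) = (\<Sum>a\<in>UNIV. sc (lookup x a) (f a))"
  by (rule lin_superset) auto

lemma lookup_lin_univ: "lookup (lin f (x :: ('a::finite) vec)) j = (\<Sum>a\<in>UNIV. lookup x a * lookup (f a) j)"
  by (simp add: lin_univ lookup_sum)

lemma ipl_univ: "ipl ip (x :: ('a::finite) vec) y = (\<Sum>a\<in>UNIV. \<Sum>b\<in>UNIV. lookup x a * lookup y b * ip a b)"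
proof -
  have "ipl ip x y = (\<Sum>a\<in>keys x. \<Sum>b\<in>UNIV. lookup x a * lookup y b * ip a b)"
    unfolding ipl_def
    by (rule sum.cong[OF refl], rule sum.mono_neutral_left) (auto simp: in_keys_iff)
  also have "\<dots> = (\<Sum>a\<in>UNIV. \<Sum>b\<in>UNIV. lookup x a * lookup y b * ip a b)"
    by (rule sum.mono_neutral_left) (auto simp: in_keys_iff)
  finally show ?thesis .
qed

lemma lookup_sum_sc_bv: "lookup (\<Sum>a\<in>(UNIV::'a::finite set). sc (f a) (bv a)) m = f m"
proof -
  have "lookup (\<Sum>a\<in>(UNIV::'a set). sc (f a) (bv a)) m = (\<Sum>a\<in>UNIV. if a = m then f a else 0)"
    unfolding lookup_sum by (rule sum.cong) (auto simp: lookup_bv)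
  also have "\<dots> = f m" by simp
  finally show ?thesis .
qed

lemma ipl_bv_bv[simp]: "ipl ip (bv a) (bv b) = ip a b"
  by (simp add: ipl_def lookup_bv)

lemma ipl_lin_left: "ipl ip (lin (f::'b::finite \<Rightarrow> 'a::finite vec) x) y = (\<Sum>k\<in>UNIV. lookup x k * ipl ip (f k) y)"
proof -
  have "ipl ip (lin f x) y = (\<Sum>a\<in>UNIV. \<Sum>b\<in>UNIV. \<Sum>k\<in>UNIV. lookup x k * (lookup (f k) a * lookup y b * ip a b))"
    by (simp add: ipl_univ lookup_lin_univ sum_distrib_right mult.assoc)
  also have "\<dots> = (\<Sum>a\<in>UNIV. \<Sum>k\<in>UNIV. \<Sum>b\<in>UNIV. lookup x k * (lookup (f k) a * lookup y b * ip a b))"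
    by (rule sum.cong[OF refl], rule sum.swap)
  also have "\<dots> = (\<Sum>k\<in>UNIV. \<Sum>a\<in>UNIV. \<Sum>b\<in>UNIV. lookup x k * (lookup (f k) a * lookup y b * ip a b))"
    by (rule sum.swap)
  also have "\<dots> = (\<Sum>k\<in>UNIV. lookup x k * ipl ip (f k) y)"
    by (simp add: ipl_univ sum_distrib_left)
  finally show ?thesis .
qed

lemma ipl_lin_right: "ipl ip (x::'a::finite vec) (lin (f::'b::finite \<Rightarrow> 'a vec) y) = (\<Sum>k\<in>UNIV. lookup y k * ipl ip x (f k))"
proof -
  have "ipl ip x (lin f y) = (\<Sum>a\<in>UNIV. \<Sum>b\<in>UNIV. \<Sum>k\<in>UNIV. lookup y k * (lookup x a * lookup (f k) b * ip a b))"
    by (simp add: ipl_univ lookup_lin_univ sum_distrib_right sum_distrib_left mult_ac)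
  also have "\<dots> = (\<Sum>a\<in>UNIV. \<Sum>k\<in>UNIV. \<Sum>b\<in>UNIV. lookup y k * (lookup x a * lookup (f k) b * ip a b))"
    by (rule sum.cong[OF refl], rule sum.swap)
  also have "\<dots> = (\<Sum>k\<in>UNIV. \<Sum>a\<in>UNIV. \<Sum>b\<in>UNIV. lookup y k * (lookup x a * lookup (f k) b * ip a b))"
    by (rule sum.swap)
  also have "\<dots> = (\<Sum>k\<in>UNIV. lookup y k * ipl ip x (f k))"
    by (simp add: ipl_univ sum_distrib_left)
  finally show ?thesis .
qed

lemma ipl_sc_left: "ipl ip (sc c (x::'a::finite vec)) y = c * ipl ip x y"
  by (simp add: ipl_univ sum_distrib_left mult_ac)

lemma sum_pair_univ: "(\<Sum>p\<in>(UNIV::('a::finite \<times> 'b::finite) set). g p) = (\<Sum>k\<in>UNIV. \<Sum>l\<in>UNIV. g (k, l))"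
  by (subst UNIV_Times_UNIV[symmetric]) (simp add: sum.cartesian_product)

lemma ipl_bv_right: "ipl ip (x::'a::finite vec) (bv a) = (\<Sum>k\<in>UNIV. lookup x k * ip k a)"
  using ipl_lin_left[of ip bv x "bv a"] by simp

lemma ipl_bv_left: "ipl ip (bv a) (y::'a::finite vec) = (\<Sum>k\<in>UNIV. lookup y k * ip a k)"
  using ipl_lin_right[of ip "bv a" bv y] by simp

locale frobenius_coalg =
  fixes deg :: "'c::finite \<Rightarrow> int" and m :: "'c \<Rightarrow> 'c \<Rightarrow> 'c vec" and u :: "'c vec"
    and d :: "'c \<Rightarrow> 'c vec" and ip :: "'c \<Rightarrow> 'c \<Rightarrow> rat" and cm :: "'c \<Rightarrow> ('c \<times> 'c) vec"
  assumes frob: "dg_frobenius deg m u d ip"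
    and comult: "induced_comult deg m ip cm"
    and coalg: "dg_coalgebra deg cm d"

sublocale frobenius_coalg \<subseteq> dg_alg deg m u d
  using frob unfolding dg_frobenius_def by unfold_locales blast

context frobenius_coalg
begin

lemma mult_commute: "m a b = sc (ksign (deg a * deg b)) (m b a)"
  using frob unfolding dg_frobenius_def graded_commutative_def by blast

lemma ip_invariant: "ipl ip (bv a) (m b c) = ipl ip (m a b) (bv c)"
  using frob unfolding dg_frobenius_def by blast

lemma ip_nondegenerate: "(\<And>y. ipl ip x y = 0) \<Longrightarrow> x = 0"
  using frob unfolding dg_frobenius_def by blast

lemma comult_ip:
  "(\<Sum>p\<in>keys (cm c). lookup (cm c) p * ksign (deg (snd p) * deg a) * ip (fst p) a * ip (snd p) b)
     = ipl ip (bv c) (m a b)"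
  using comult unfolding induced_comult_def by blast

lemma comult_homog: "homog (tdeg deg deg) (deg c) (cm c)"
  using coalg unfolding dg_coalgebra_def graded_coalgebra_def by blast

lemma comult_coassoc:
  "lin (\<lambda>((a, b), k). bv (a, (b, k))) (lin (\<lambda>(a, b). tens (cm a) (bv b)) (cm c))
     = lin (\<lambda>(a, b). tens (bv a) (cm b)) (cm c)"
  using coalg unfolding dg_coalgebra_def graded_coalgebra_def by blast

lemma comult_coderivation: "lin cm (d c) = lin (tdiff deg d d) (cm c)"
  using coalg unfolding dg_coalgebra_def coderivation_def by blast

definition tens_pairing :: "('c \<times> 'c) vec \<Rightarrow> 'c \<Rightarrow> 'c \<Rightarrow> rat" where
  "tens_pairing z a b = (\<Sum>p\<in>UNIV. lookup z p * (ksign (deg (snd p) * deg a) * ip (fst p) a * ip (snd p) b))"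

lemma tens_pairing_comult: "tens_pairing (cm c) a b = ipl ip (bv c) (m a b)"
proof -
  have "tens_pairing (cm c) a b = (\<Sum>p\<in>keys (cm c). lookup (cm c) p * (ksign (deg (snd p) * deg a) * ip (fst p) a * ip (snd p) b))"
    unfolding tens_pairing_def by (rule sum.mono_neutral_right) (auto simp: in_keys_iff)
  then show ?thesis using comult_ip[of c a b] by (simp add: mult.assoc)
qed

lemma tens_pairing_lin: "tens_pairing (lin (F::'x::finite \<Rightarrow> ('c \<times> 'c) vec) z) a b = (\<Sum>p\<in>UNIV. lookup z p * tens_pairing (F p) a b)"
proof -
  have "tens_pairing (lin F z) a b = (\<Sum>q\<in>UNIV. \<Sum>p\<in>UNIV. lookup z p * (lookup (F p) q * (ksign (deg (snd q) * deg a) * ip (fst q) a * ip (snd q) b)))"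
    unfolding tens_pairing_def lookup_lin_univ by (simp add: sum_distrib_right mult.assoc)
  also have "\<dots> = (\<Sum>p\<in>UNIV. \<Sum>q\<in>UNIV. lookup z p * (lookup (F p) q * (ksign (deg (snd q) * deg a) * ip (fst q) a * ip (snd q) b)))"
    by (rule sum.swap)
  also have "\<dots> = (\<Sum>p\<in>UNIV. lookup z p * tens_pairing (F p) a b)"
    unfolding tens_pairing_def by (simp add: sum_distrib_left)
  finally show ?thesis .
qed

lemma tens_pairing_bv: "tens_pairing (bv (k, l)) a b = ksign (deg l * deg a) * ip k a * ip l b"
proof -
  have "tens_pairing (bv (k, l)) a b = (\<Sum>p\<in>UNIV. if p = (k, l) then ksign (deg (snd p) * deg a) * ip (fst p) a * ip (snd p) b else 0)"
    unfolding tens_pairing_def by (rule sum.cong) (auto simp: lookup_bv)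
  also have "\<dots> = ksign (deg l * deg a) * ip k a * ip l b" by simp
  finally show ?thesis .
qed

lemma tens_pairing_tens_bv: "tens_pairing (tens X (bv l)) a b = ksign (deg l * deg a) * ipl ip X (bv a) * ip l b"
proof -
  have "tens X (bv l) = lin (\<lambda>k. bv (k, l)) X" by (simp add: tens_eq_lin)
  then have "tens_pairing (tens X (bv l)) a b = (\<Sum>k\<in>UNIV. lookup X k * (ksign (deg l * deg a) * ip k a * ip l b))"
    by (simp add: tens_pairing_lin tens_pairing_bv)
  also have "\<dots> = ksign (deg l * deg a) * ipl ip X (bv a) * ip l b"
    by (simp add: ipl_bv_right sum_distrib_left sum_distrib_right mult_ac)
  finally show ?thesis .
qed

lemma tens_pairing_diff: "tens_pairing (z1 - z2) a b = tens_pairing z1 a b - tens_pairing z2 a b"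
  unfolding tens_pairing_def by (simp add: lookup_minus algebra_simps sum_subtractf)

lemma ip_nondegenerate_fun:
  assumes "\<And>b. (\<Sum>k\<in>UNIV. f k * ip k b) = 0"
  shows "f k = 0"
proof -
  define v where "v = (\<Sum>k\<in>UNIV. sc (f k) (bv k))"
  have "ipl ip v y = 0" for y
  proof -
    have "ipl ip v y = (\<Sum>b\<in>UNIV. lookup y b * (\<Sum>k\<in>UNIV. f k * ip k b))"
      unfolding ipl_univ v_def lookup_sum_sc_bv by (subst sum.swap) (simp add: sum_distrib_left mult_ac)
    then show ?thesis using assms by simp
  qed
  then have "v = 0" by (rule ip_nondegenerate)
  then show ?thesis using lookup_sum_sc_bv[of f k] unfolding v_def by simp
qed

lemma tens_pairing_nondegenerate:
  assumes H: "\<And>a b. tens_pairing z a b = 0"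
  shows "z = 0"
proof -
  have contract: "(\<Sum>k\<in>UNIV. lookup z (k, l) * ip k a) = 0" for a l
  proof -
    have "(\<Sum>l\<in>UNIV. (ksign (deg l * deg a) * (\<Sum>k\<in>UNIV. lookup z (k, l) * ip k a)) * ip l b)
        = tens_pairing z a b" for b
      unfolding tens_pairing_def sum_pair_univ
      by (subst sum.swap) (simp add: sum_distrib_left sum_distrib_right mult_ac)
    then have "ksign (deg l * deg a) * (\<Sum>k\<in>UNIV. lookup z (k, l) * ip k a) = 0"
      using H by (intro ip_nondegenerate_fun[where f="\<lambda>l. ksign (deg l * deg a) * _ l"]) simp
    then show ?thesis by simp
  qed
  have "lookup z (k, l) = 0" for k l
    using contract by (intro ip_nondegenerate_fun[where f="\<lambda>k. lookup z (k, l)"])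
  then show ?thesis by (intro poly_mapping_eqI) auto
qed

lemma ip_mult_lin: "ipl ip (m x y) Z = ipl ip (bv x) (lin (m y) Z)"
proof -
  have "ipl ip (m x y) Z = ipl ip (m x y) (lin bv Z)" by simp
  also have "\<dots> = (\<Sum>z\<in>UNIV. lookup Z z * ipl ip (m x y) (bv z))" by (rule ipl_lin_right)
  also have "\<dots> = (\<Sum>z\<in>UNIV. lookup Z z * ipl ip (bv x) (m y z))" by (simp add: ip_invariant)
  also have "\<dots> = ipl ip (bv x) (lin (m y) Z)" by (simp add: ipl_lin_right)
  finally show ?thesis .
qed

lemma ipl_expand_left: "ipl ip X Y = (\<Sum>j\<in>UNIV. lookup X j * ipl ip (bv j) Y)"
  using ipl_lin_left[of ip bv X Y] by simp

lemma tens_pairing_lin_comult: "tens_pairing (lin cm X) a b = ipl ip X (m a b)"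
  by (simp add: tens_pairing_lin tens_pairing_comult ipl_expand_left[of X])

lemma tens_pairing_comult_mult:
  "tens_pairing (lin cm (m c c')) a b = ksign (deg c * deg c') * ipl ip (bv c') (lin (m c) (m a b))"
proof -
  have "tens_pairing (lin cm (m c c')) a b = ipl ip (m c c') (m a b)" by (rule tens_pairing_lin_comult)
  also have "\<dots> = ksign (deg c * deg c') * ipl ip (m c' c) (m a b)"
    by (subst mult_commute) (simp add: ipl_sc_left)
  also have "\<dots> = ksign (deg c * deg c') * ipl ip (bv c') (lin (m c) (m a b))"
    by (simp add: ip_mult_lin)
  finally show ?thesis .
qed

lemma tens_pairing_mult_comult:
  "tens_pairing (lin (\<lambda>(k, l). tens (m c k) (bv l)) (cm c')) a b
     = ksign (deg c * deg c') * ipl ip (bv c') (lin (m c) (m a b))"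
proof -
  have S: "lookup (cm c') p * lookup (m c a) j * (ksign (deg (snd p) * deg a) * ksign (deg c * deg (fst p)))
      = lookup (cm c') p * lookup (m c a) j * (ksign (deg c * deg c') * ksign (deg (snd p) * deg j))" for p :: "'c \<times> 'c" and j
  proof (cases "lookup (cm c') p = 0 \<or> lookup (m c a) j = 0")
    case False
    then have "p \<in> keys (cm c')" "j \<in> keys (m c a)" by (auto simp: in_keys_iff)
    then have d1: "deg (fst p) + deg (snd p) = deg c'" and d2: "deg j = deg c + deg a"
      using homogD[OF comult_homog] homogD[OF mult_homog] by (auto simp: tdeg_def)
    have "ksign (deg (snd p) * deg a) * ksign (deg c * deg (fst p)) = ksign (deg c * deg c') * ksign (deg (snd p) * deg j)"
      by (rule ksign_mult_eq2) (simp add: d1[symmetric] d2 algebra_simps)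
    then show ?thesis by simp
  qed auto
  have "tens_pairing (lin (\<lambda>(k, l). tens (m c k) (bv l)) (cm c')) a b = (\<Sum>p\<in>UNIV. lookup (cm c') p * (ksign (deg (snd p) * deg a) * ipl ip (m c (fst p)) (bv a) * ip (snd p) b))"
    by (simp add: tens_pairing_lin case_prod_beta tens_pairing_tens_bv)
  also have "\<dots> = (\<Sum>p\<in>UNIV. \<Sum>j\<in>UNIV. lookup (cm c') p * lookup (m c a) j * (ksign (deg (snd p) * deg a) * ksign (deg c * deg (fst p))) * (ip (fst p) j * ip (snd p) b))"
  proof (rule sum.cong[OF refl])
    fix p :: "'c \<times> 'c"
    have "ipl ip (m c (fst p)) (bv a) = ksign (deg c * deg (fst p)) * ipl ip (bv (fst p)) (m c a)"
      by (subst mult_commute) (simp add: ipl_sc_left ip_invariant)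
    then show "lookup (cm c') p * (ksign (deg (snd p) * deg a) * ipl ip (m c (fst p)) (bv a) * ip (snd p) b)
       = (\<Sum>j\<in>UNIV. lookup (cm c') p * lookup (m c a) j * (ksign (deg (snd p) * deg a) * ksign (deg c * deg (fst p))) * (ip (fst p) j * ip (snd p) b))"
      by (simp add: ipl_bv_left sum_distrib_left sum_distrib_right mult_ac)
  qed
  also have "\<dots> = (\<Sum>p\<in>UNIV. \<Sum>j\<in>UNIV. lookup (cm c') p * lookup (m c a) j * (ksign (deg c * deg c') * ksign (deg (snd p) * deg j)) * (ip (fst p) j * ip (snd p) b))"
    by (simp only: S)
  also have "\<dots> = (\<Sum>j\<in>UNIV. \<Sum>p\<in>UNIV. lookup (cm c') p * lookup (m c a) j * (ksign (deg c * deg c') * ksign (deg (snd p) * deg j)) * (ip (fst p) j * ip (snd p) b))"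
    by (rule sum.swap)
  also have "\<dots> = ksign (deg c * deg c') * (\<Sum>j\<in>UNIV. lookup (m c a) j * tens_pairing (cm c') j b)"
    unfolding tens_pairing_def by (simp add: sum_distrib_left mult_ac)
  also have "\<dots> = ksign (deg c * deg c') * (\<Sum>j\<in>UNIV. lookup (m c a) j * ipl ip (bv c') (m j b))"
    by (simp add: tens_pairing_comult)
  also have "\<dots> = ksign (deg c * deg c') * ipl ip (bv c') (lin (\<lambda>j. m j b) (m c a))"
    by (simp add: ipl_lin_right)
  also have "\<dots> = ksign (deg c * deg c') * ipl ip (bv c') (lin (m c) (m a b))"
    by (simp add: mult_lin_assoc)
  finally show ?thesis .
qed

text \<open>The Frobenius relation: paired with any \<open>a \<otimes> b\<close>, both sides reduce to \<open>\<langle>c', c a b\<rangle>\<close> up to the same sign,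
  by invariance of the inner product and associativity.\<close>

lemma comult_mult_left: "lin cm (m c c') = lin (\<lambda>(k, l). tens (m c k) (bv l)) (cm c')"
proof -
  have "tens_pairing (lin cm (m c c') - lin (\<lambda>(k, l). tens (m c k) (bv l)) (cm c')) a b = 0" for a b
    by (simp add: tens_pairing_diff tens_pairing_comult_mult tens_pairing_mult_comult)
  then show ?thesis by (metis tens_pairing_nondegenerate right_minus_eq)
qed

lemma lin_comult_cong:
  "(\<And>k l. deg k + deg l = deg c \<Longrightarrow> F (k, l) = G (k, l)) \<Longrightarrow> lin F (cm c) = lin G (cm c)"
proof (rule lin_cong)
  fix p assume "\<And>k l. deg k + deg l = deg c \<Longrightarrow> F (k, l) = G (k, l)" "p \<in> keys (cm c)"
  moreover have "deg (fst p) + deg (snd p) = deg c"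
    using homogD[OF comult_homog \<open>p \<in> keys (cm c)\<close>] by (simp add: tdeg_def)
  ultimately show "F p = G p" by (metis prod.collapse)
qed

lemma comult_mult_right: "lin cm (m c c') = lin (\<lambda>(k, l). sc (ksign (deg l * deg c')) (tens (m k c') (bv l))) (cm c)"
proof -
  have "lin cm (m c c') = sc (ksign (deg c * deg c')) (lin cm (m c' c))"
    by (subst mult_commute) (simp add: lin_sc)
  also have "\<dots> = sc (ksign (deg c * deg c')) (lin (\<lambda>(k, l). tens (m c' k) (bv l)) (cm c))"
    by (simp add: comult_mult_left)
  also have "\<dots> = lin (\<lambda>(k, l). sc (ksign (deg c * deg c')) (tens (m c' k) (bv l))) (cm c)"
    by (simp add: lin_sc_fun[symmetric] case_prod_beta')
  also have "\<dots> = lin (\<lambda>(k, l). sc (ksign (deg l * deg c')) (tens (m k c') (bv l))) (cm c)"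
  proof (rule lin_comult_cong)
    fix k l assume d: "deg k + deg l = deg c"
    have "ksign (deg l * deg c') * ksign (deg k * deg c') = ksign (deg c * deg c')"
      by (rule ksign_mult_eq) (simp add: d[symmetric] algebra_simps)
    then show "(case (k, l) of (k, l) \<Rightarrow> sc (ksign (deg c * deg c')) (tens (m c' k) (bv l))) =
          (case (k, l) of (k, l) \<Rightarrow> sc (ksign (deg l * deg c')) (tens (m k c') (bv l)))"
      by (subst (2) mult_commute) (simp add: tens_sc_left)
  qed
  finally show ?thesis .
qed

lemma lin_comult_coassoc:
  "lin (\<lambda>(a, b). lin (\<lambda>(x, y). f x y b) (cm a)) (cm c) = lin (\<lambda>(a, b). lin (\<lambda>(y, z). f a y z) (cm b)) (cm c)"
proof -
  let ?F = "\<lambda>(a, q). (case q of (y, z) \<Rightarrow> f a y z)"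
  have "lin ?F (lin (\<lambda>((a, b), k). bv (a, (b, k))) (lin (\<lambda>(a, b). tens (cm a) (bv b)) (cm c)))
      = lin ?F (lin (\<lambda>(a, b). tens (bv a) (cm b)) (cm c))"
    by (simp only: comult_coassoc)
  moreover have "lin ?F (lin (\<lambda>((a, b), k). bv (a, (b, k))) (lin (\<lambda>(a, b). tens (cm a) (bv b)) (cm c)))
      = lin (\<lambda>(a, b). lin (\<lambda>(x, y). f x y b) (cm a)) (cm c)"
    unfolding lin_lin by (rule lin_cong) (auto simp: lin_tens case_prod_beta')
  moreover have "lin ?F (lin (\<lambda>(a, b). tens (bv a) (cm b)) (cm c))
      = lin (\<lambda>(a, b). lin (\<lambda>(y, z). f a y z) (cm b)) (cm c)"
    unfolding lin_lin by (rule lin_cong) (auto simp: lin_tens case_prod_beta')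
  ultimately show ?thesis by simp
qed

end

locale dg_alg_pair = C: dg_alg degC mC uC dC + H: dg_alg degH mH uH dH
  for degC :: "'c \<Rightarrow> int" and mC uC dC and degH :: "'h \<Rightarrow> int" and mH uH dH
begin

abbreviation tensor_mult :: "'c \<times> 'h \<Rightarrow> 'c \<times> 'h \<Rightarrow> ('c \<times> 'h) vec"
  where "tensor_mult \<equiv> tmul degC degH mC mH"
abbreviation tensor_diff :: "'c \<times> 'h \<Rightarrow> ('c \<times> 'h) vec"
  where "tensor_diff \<equiv> tdiff degC dC dH"

lemma lin_tensor_diff_tens:
  assumes "homog degC n X"
  shows "lin tensor_diff (tens X Y) = tens (lin dC X) Y + sc (ksign n) (tens X (lin dH Y))"
proof -
  have "lin tensor_diff (tens X Y) = lin (\<lambda>k. lin (\<lambda>l. tens (dC k) (bv l) + sc (ksign n) (tens (bv k) (dH l))) Y) X"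
    unfolding lin_tens
  proof (rule lin_cong)
    fix k assume "k \<in> keys X"
    then have "degC k = n" by (rule homogD[OF assms])
    then show "lin (\<lambda>b. tensor_diff (k, b)) Y = lin (\<lambda>l. tens (dC k) (bv l) + sc (ksign n) (tens (bv k) (dH l))) Y"
      by (simp add: tdiff_def)
  qed
  also have "\<dots> = tens (lin dC X) Y + sc (ksign n) (tens X (lin dH Y))"
    by (simp only: lin_add_fun lin_sc_fun tens_lin_right[symmetric] lin_bv_self tens_lin_left[symmetric])
  finally show ?thesis .
qed

lemma tensor_diff_leibniz: "lin tensor_diff (tensor_mult (c, h) (c', h')) = lin (\<lambda>s. tensor_mult s (c', h')) (tensor_diff (c, h))
             + sc (ksign (degC c + degH h)) (lin (tensor_mult (c, h)) (tensor_diff (c', h')))"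
proof -
  define A1 where "A1 = tens (lin (\<lambda>a. mC a c') (dC c)) (mH h h')"
  define A2 where "A2 = tens (lin (mC c) (dC c')) (mH h h')"
  define A3 where "A3 = tens (mC c c') (lin (\<lambda>l. mH l h') (dH h))"
  define A4 where "A4 = tens (mC c c') (lin (mH h) (dH h'))"
  have "lin tensor_diff (tensor_mult (c, h) (c', h')) = sc (ksign (degH h * degC c'))
     (tens (lin dC (mC c c')) (mH h h') + sc (ksign (degC c + degC c')) (tens (mC c c') (lin dH (mH h h'))))"
    by (simp only: tmul_pair lin_sc lin_tensor_diff_tens[OF C.mult_homog])
  also have "\<dots> = sc (ksign (degH h * degC c')) (A1 + sc (ksign (degC c)) A2
       + sc (ksign (degC c + degC c')) (A3 + sc (ksign (degH h)) A4))"
    by (simp only: C.diff_mult_leibniz H.diff_mult_leibniz tens_add_left tens_add_right tens_sc_left tens_sc_right A1_def A2_def A3_def A4_def)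
  also have "\<dots> = sc (ksign (degH h * degC c')) A1 + sc (ksign (degH h * degC c') * ksign (degC c)) A2
       + sc (ksign (degH h * degC c') * ksign (degC c + degC c')) A3
       + sc (ksign (degH h * degC c') * ksign (degC c + degC c') * ksign (degH h)) A4"
    by (simp only: sc_add_right sc_sc mult.assoc add.assoc)
  finally have L: "lin tensor_diff (tensor_mult (c, h) (c', h')) = \<dots>" .
  have r1: "lin (\<lambda>s. tensor_mult s (c', h')) (tens (dC c) (bv h)) = sc (ksign (degH h * degC c')) A1"
    unfolding lin_tens lin_tmul_right[OF homog_bv[THEN iffD2, OF refl]] A1_def by simp
  have r2: "lin (\<lambda>s. tensor_mult s (c', h')) (tens (bv c) (dH h)) = sc (ksign ((degH h - 1) * degC c')) A3"
    unfolding lin_tens lin_tmul_right[OF H.diff_homog] A3_def by simp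
  have r3: "lin (tensor_mult (c, h)) (tens (dC c') (bv h')) = sc (ksign (degH h * (degC c' - 1))) A2"
    unfolding lin_tens lin_tmul_left[OF C.diff_homog] A2_def by simp
  have r4: "lin (tensor_mult (c, h)) (tens (bv c') (dH h')) = sc (ksign (degH h * degC c')) A4"
    unfolding lin_tens lin_tmul_left[OF homog_bv[THEN iffD2, OF refl]] A4_def by simp
  have "lin (\<lambda>s. tensor_mult s (c', h')) (tensor_diff (c, h)) + sc (ksign (degC c + degH h)) (lin (tensor_mult (c, h)) (tensor_diff (c', h')))
     = sc (ksign (degH h * degC c')) A1 + sc (ksign (degC c) * ksign ((degH h - 1) * degC c')) A3
       + (sc (ksign (degC c + degH h) * ksign (degH h * (degC c' - 1))) A2
          + sc (ksign (degC c + degH h) * ksign (degC c') * ksign (degH h * degC c')) A4)"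
    unfolding tdiff_def fst_conv snd_conv
    by (simp only: lin_add lin_sc r1 r2 r3 r4 sc_add_right sc_sc mult.assoc)
  moreover have "ksign (degC c) * ksign ((degH h - 1) * degC c') = ksign (degH h * degC c') * ksign (degC c + degC c')"
    by (rule ksign_mult_eq2) (simp add: algebra_simps)
  moreover have "ksign (degC c + degH h) * ksign (degH h * (degC c' - 1)) = ksign (degH h * degC c') * ksign (degC c)"
    by (rule ksign_mult_eq2) (simp add: algebra_simps)
  moreover have "ksign (degC c + degH h) * ksign (degC c') * ksign (degH h * degC c')
      = ksign (degH h * degC c') * ksign (degC c + degC c') * ksign (degH h)"
    by (simp add: ksign_add mult_ac)
  ultimately show ?thesis unfolding L by (simp only: add_ac mult.assoc)
qed

lemma tensor_diff_square: "lin tensor_diff (tensor_diff p) = 0"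
proof -
  obtain c h where p: "p = (c, h)" by fastforce
  have "lin tensor_diff (tensor_diff p) = (tens (lin dC (dC c)) (bv h) + sc (ksign (degC c - 1)) (tens (dC c) (dH h)))
      + sc (ksign (degC c)) (tens (dC c) (dH h) + sc (ksign (degC c)) (tens (bv c) (lin dH (dH h))))"
    unfolding p tdiff_def fst_conv snd_conv lin_add lin_sc lin_tensor_diff_tens[OF C.diff_homog] lin_tensor_diff_tens[OF homog_bv[THEN iffD2, OF refl]]
    by simp
  also have "\<dots> = 0"
  proof -
    have "ksign (degC c - 1) = - ksign (degC c)" by (simp add: ksign_neg_iff)
    then show ?thesis by (simp add: C.diff_diff_zero H.diff_diff_zero sc_minus_left sc_add_right)
  qed
  finally show ?thesis .
qed

lemma homog_tensor_diff: "homog (tdeg degC degH) (tdeg degC degH p - 1) (tensor_diff p)"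
proof -
  obtain c h where p: "p = (c, h)" by fastforce
  have "homog (tdeg degC degH) (degC c - 1 + degH h) (tens (dC c) (bv h))"
    by (rule homog_tens[OF C.diff_homog homog_bv[THEN iffD2, OF refl]])
  moreover have "homog (tdeg degC degH) (degC c + (degH h - 1)) (tens (bv c) (dH h))"
    by (rule homog_tens[OF homog_bv[THEN iffD2, OF refl] H.diff_homog])
  ultimately show ?thesis
    unfolding p tdiff_def fst_conv snd_conv tdeg_def
    by (intro homog_add homog_sc) (simp_all add: algebra_simps)
qed

end

section \<open>The twisted differential\<close>

locale twisted_tensor = dg_alg_pair degC mC uC dC degH mH uH dH + C: frobenius_coalg degC mC uC dC ip cmC
  for degC :: "'c::finite \<Rightarrow> int" and mC uC dC ip cmC and degH :: "'h \<Rightarrow> int" and mH uH dH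
  + fixes \<tau> :: "'c \<Rightarrow> 'h vec"
  assumes cocomm: "cocommutative degC cmC"
    and tw: "twisting_cochain degC cmC dC degH mH dH \<tau>"
begin

lemma cocommutative_comult: "lin (\<lambda>(a, b). sc (ksign (degC a * degC b)) (bv (b, a))) (cmC c) = cmC c"
  using cocomm unfolding cocommutative_def by blast

lemma tau_homog: "homog degH (degC c - 1) (\<tau> c)"
  using tw unfolding twisting_cochain_def by blast

lemma twisting_eq:
  "lin dH (\<tau> c) + lin \<tau> (dC c) + lin (\<lambda>(a, b). sc (ksign (degC a)) (lin2 mH (\<tau> a) (\<tau> b))) (cmC c) = 0"
  using tw unfolding twisting_cochain_def by blast

abbreviation D :: "'c \<times> 'h \<Rightarrow> ('c \<times> 'h) vec" where "D \<equiv> twisted_diff degC cmC dC degH mH dH \<tau>"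

definition twist :: "'c \<times> 'h \<Rightarrow> ('c \<times> 'h) vec" where
  "twist p = lin (\<lambda>(a, b). sc (ksign (degC a)) (tens (bv a) (H.br (\<tau> b) (snd p)))) (cmC (fst p))"

lemma twisted_diff_eq: "twisted_diff degC cmC dC degH mH dH \<tau> p = tensor_diff p + twist p"
  by (simp add: twisted_diff_def twist_def)

lemma lin_twist_tens: "lin twist (tens X Y) = lin (\<lambda>(a, b). sc (ksign (degC a)) (tens (bv a) (lin (H.br (\<tau> b)) Y))) (lin cmC X)"
proof -
  have "lin twist (tens X Y) = lin (\<lambda>k. lin (\<lambda>l. lin (\<lambda>q. sc (ksign (degC (fst q))) (tens (bv (fst q)) (H.br (\<tau> (snd q)) l))) (cmC k)) Y) X"
    by (simp add: lin_tens twist_def case_prod_beta')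
  also have "\<dots> = lin (\<lambda>k. lin (\<lambda>q. lin (\<lambda>l. sc (ksign (degC (fst q))) (tens (bv (fst q)) (H.br (\<tau> (snd q)) l))) Y) (cmC k)) X"
    by (rule lin_cong) (rule lin_swap)
  also have "\<dots> = lin (\<lambda>k. lin (\<lambda>q. sc (ksign (degC (fst q))) (tens (bv (fst q)) (lin (H.br (\<tau> (snd q))) Y))) (cmC k)) X"
    by (simp only: lin_sc_fun tens_lin_right[symmetric])
  also have "\<dots> = lin (\<lambda>(a, b). sc (ksign (degC a)) (tens (bv a) (lin (H.br (\<tau> b)) Y))) (lin cmC X)"
    by (simp add: lin_lin case_prod_beta')
  finally show ?thesis .
qed

lemma twist_tensor_mult_left:
  "sc (ksign (degH h * degC c'))
      (lin (\<lambda>(a, b). sc (ksign (degC a)) (tens (bv a) (lin (\<lambda>y. mH y h') (H.br (\<tau> b) h)))) (lin cmC (mC c c')))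
   = lin (\<lambda>s. tensor_mult s (c', h')) (twist (c, h))"
proof -
  define G where "G b = lin (\<lambda>y. mH y h') (H.br (\<tau> b) h)" for b
  have "lin (\<lambda>(a, b). sc (ksign (degC a)) (tens (bv a) (G b))) (lin cmC (mC c c'))
      = lin (\<lambda>(k, l). sc (ksign (degC l * degC c') * ksign (degC k + degC c')) (tens (mC k c') (G l))) (cmC c)"
    unfolding C.comult_mult_right lin_lin
    by (rule lin_cong) (auto simp: lin_sc lin_case_tens_bv lin_ksign_tens_bv1[OF C.mult_homog])
  then have "sc (ksign (degH h * degC c')) (lin (\<lambda>(a, b). sc (ksign (degC a)) (tens (bv a) (G b))) (lin cmC (mC c c')))
      = lin (\<lambda>(k, l). sc (ksign (degH h * degC c') * (ksign (degC l * degC c') * ksign (degC k + degC c')))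
          (tens (mC k c') (G l))) (cmC c)"
    by (simp add: lin_sc_fun[symmetric] case_prod_beta')
  also have "\<dots> = lin (\<lambda>(k, l). sc (ksign (degC k) * ksign ((degC l - 1 + degH h) * degC c')) (tens (mC k c') (G l))) (cmC c)"
  proof -
    have "ksign (degH h * degC c') * (ksign (degC l * degC c') * ksign (degC k + degC c'))
        = ksign (degC k) * ksign ((degC l - 1 + degH h) * degC c')" for k l
      by (simp only: ksign_add[symmetric] ksign_eq_iff) (simp add: algebra_simps)
    then show ?thesis by (intro lin_cong) (simp split: prod.split)
  qed
  also have "\<dots> = lin (\<lambda>s. tensor_mult s (c', h')) (twist (c, h))"
    unfolding twist_def lin_lin fst_conv snd_conv
    by (rule lin_cong) (auto simp: lin_sc lin_tens lin_tmul_right[OF H.homog_br[OF tau_homog]] G_def)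
  finally show ?thesis unfolding G_def .
qed

lemma twist_tensor_mult_right:
  "sc (ksign (degH h * degC c'))
      (lin (\<lambda>(a, b). sc (ksign (degC a) * ksign ((degC b - 1) * degH h)) (tens (bv a) (lin (mH h) (H.br (\<tau> b) h'))))
        (lin cmC (mC c c')))
   = sc (ksign (degC c + degH h)) (lin (tensor_mult (c, h)) (twist (c', h')))"
proof -
  define G where "G b = lin (mH h) (H.br (\<tau> b) h')" for b
  have "lin (\<lambda>(a, b). sc (ksign (degC a) * ksign ((degC b - 1) * degH h)) (tens (bv a) (G b))) (lin cmC (mC c c'))
      = lin (\<lambda>(k, l). sc (ksign (degC c + degC k) * ksign ((degC l - 1) * degH h)) (tens (mC c k) (G l))) (cmC c')"
    unfolding C.comult_mult_left lin_lin
    by (rule lin_cong) (auto simp: lin_case_tens_bv lin_ksign_tens_bv[OF C.mult_homog])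
  then have "sc (ksign (degH h * degC c'))
        (lin (\<lambda>(a, b). sc (ksign (degC a) * ksign ((degC b - 1) * degH h)) (tens (bv a) (G b))) (lin cmC (mC c c')))
      = lin (\<lambda>(k, l). sc (ksign (degH h * degC c') * (ksign (degC c + degC k) * ksign ((degC l - 1) * degH h)))
          (tens (mC c k) (G l))) (cmC c')"
    by (simp add: lin_sc_fun[symmetric] case_prod_beta')
  also have "\<dots> = lin (\<lambda>(k, l). sc (ksign (degC c + degH h) * (ksign (degC k) * ksign (degH h * degC k)))
      (tens (mC c k) (G l))) (cmC c')"
  proof -
    have "ksign (degH h * degC c') * (ksign (degC c + degC k) * ksign ((degC l - 1) * degH h))
        = ksign (degC c + degH h) * (ksign (degC k) * ksign (degH h * degC k))"
      if "degC k + degC l = degC c'" for k l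
      by (simp only: ksign_add[symmetric] ksign_eq_iff) (simp add: that[symmetric] algebra_simps)
    then show ?thesis by (intro C.lin_comult_cong) simp
  qed
  also have "\<dots> = sc (ksign (degC c + degH h)) (lin (tensor_mult (c, h)) (twist (c', h')))"
    unfolding twist_def lin_lin fst_conv snd_conv lin_sc_fun[symmetric]
    by (rule lin_cong) (auto simp: lin_sc lin_sc_fun lin_tens lin_tmul_bv_left G_def mult_ac)
  finally show ?thesis unfolding G_def .
qed

text \<open>The bracket with \<open>\<tau>(c\<^sub>2)\<close> is a derivation; its two terms are matched using \<open>\<Delta>(c c') = \<Delta>(c) c'\<close> and
  \<open>\<Delta>(c c') = c \<Delta>(c')\<close> respectively.\<close>

lemma twist_leibniz: "lin twist (tensor_mult (c, h) (c', h')) = lin (\<lambda>s. tensor_mult s (c', h')) (twist (c, h))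
             + sc (ksign (degC c + degH h)) (lin (tensor_mult (c, h)) (twist (c', h')))"
proof -
  have "(\<lambda>(a, b). sc (ksign (degC a)) (tens (bv a) (lin (H.br (\<tau> b)) (mH h h'))))
      = (\<lambda>(a, b). sc (ksign (degC a)) (tens (bv a) (lin (\<lambda>y. mH y h') (H.br (\<tau> b) h)))
           + sc (ksign (degC a) * ksign ((degC b - 1) * degH h)) (tens (bv a) (lin (mH h) (H.br (\<tau> b) h'))))"
    by (simp add: fun_eq_iff H.br_derivation[OF tau_homog] tens_add_right tens_sc_right sc_add_right)
  then have "lin twist (tensor_mult (c, h) (c', h'))
      = sc (ksign (degH h * degC c'))
          (lin (\<lambda>(a, b). sc (ksign (degC a)) (tens (bv a) (lin (\<lambda>y. mH y h') (H.br (\<tau> b) h)))) (lin cmC (mC c c'))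
         + lin (\<lambda>(a, b). sc (ksign (degC a) * ksign ((degC b - 1) * degH h)) (tens (bv a) (lin (mH h) (H.br (\<tau> b) h'))))
            (lin cmC (mC c c')))"
    by (simp only: tmul_pair lin_sc lin_twist_tens fst_conv snd_conv lin_add_fun[symmetric] case_prod_beta')
  then show ?thesis
    by (simp only: sc_add_right twist_tensor_mult_left twist_tensor_mult_right)
qed

definition tau_jacobiator :: "'h \<Rightarrow> 'c \<Rightarrow> 'c \<Rightarrow> 'h vec" where
  "tau_jacobiator h y z = lin (H.br (\<tau> y)) (H.br (\<tau> z) h) - H.br (lin2 mH (\<tau> y) (\<tau> z)) h"

lemma tau_jacobiator_eq: "tau_jacobiator h y z = lin (\<lambda>k. lin (\<lambda>l. H.jacobiator h k l) (\<tau> z)) (\<tau> y)"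
proof -
  have A: "lin (H.br (\<tau> y)) (H.br (\<tau> z) h) = lin (\<lambda>k. lin (\<lambda>l. lin (H.br (bv k)) (H.br (bv l) h)) (\<tau> z)) (\<tau> y)"
    unfolding H.lin_br_expand[of "\<tau> y"] H.br_expand[of "\<tau> z"] lin_lin by (rule lin_swap)
  have B: "H.br (lin2 mH (\<tau> y) (\<tau> z)) h = lin (\<lambda>k. lin (\<lambda>l. H.br (mH k l) h) (\<tau> z)) (\<tau> y)"
    unfolding lin2_lin H.br_lin ..
  show ?thesis unfolding tau_jacobiator_def A B H.jacobiator_def lin_diff_fun ..
qed

lemma tau_jacobiator_swap: "tau_jacobiator h z y = sc (ksign ((degC z - 1) * (degC y - 1))) (tau_jacobiator h y z)"
proof -
  have "tau_jacobiator h z y = lin (\<lambda>l. lin (\<lambda>k. H.jacobiator h k l) (\<tau> z)) (\<tau> y)"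
    unfolding tau_jacobiator_eq by (rule lin_swap)
  also have "\<dots> = lin (\<lambda>l. lin (\<lambda>k. sc (ksign ((degC z - 1) * (degC y - 1))) (H.jacobiator h l k)) (\<tau> z)) (\<tau> y)"
  proof (rule lin_cong, rule lin_cong)
    fix l k assume l: "l \<in> keys (\<tau> y)" and k: "k \<in> keys (\<tau> z)"
    have "degH k = degC z - 1" "degH l = degC y - 1" using homogD[OF tau_homog k] homogD[OF tau_homog l] by auto
    then show "H.jacobiator h k l = sc (ksign ((degC z - 1) * (degC y - 1))) (H.jacobiator h l k)"
      using H.jacobiator_swap[of h k l] by simp
  qed
  also have "\<dots> = sc (ksign ((degC z - 1) * (degC y - 1))) (tau_jacobiator h y z)"
    unfolding tau_jacobiator_eq by (simp only: lin_sc_fun)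
  finally show ?thesis .
qed

lemma lin_comult_cocomm: "lin F (cmC b) = lin (\<lambda>(a, c). sc (ksign (degC a * degC c)) (F (c, a))) (cmC b)"
proof -
  have "lin F (cmC b) = lin F (lin (\<lambda>(a, c). sc (ksign (degC a * degC c)) (bv (c, a))) (cmC b))"
    by (simp only: cocommutative_comult)
  also have "\<dots> = lin (\<lambda>(a, c). sc (ksign (degC a * degC c)) (F (c, a))) (cmC b)"
    unfolding lin_lin by (rule lin_cong) (clarsimp simp only: case_prod_beta' lin_sc lin_bv)
  finally show ?thesis .
qed

text \<open>Swapping the tensor factors of \<open>\<Delta>\<close> (cocommutativity) and the two arguments of the Jacobiator
  changes the sum by the sign \<open>-1\<close>.\<close>
lemma comult_tau_jacobiator_eq_0: "lin (\<lambda>(y, z). sc (ksign (degC y)) (tau_jacobiator h y z)) (cmC b) = 0"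
proof (rule vec_eq_uminus_self)
  let ?S = "lin (\<lambda>(y, z). sc (ksign (degC y)) (tau_jacobiator h y z)) (cmC b)"
  have "?S = lin (\<lambda>(y, z). sc (ksign (degC y * degC z)) (sc (ksign (degC z)) (tau_jacobiator h z y))) (cmC b)"
    by (subst lin_comult_cocomm) (simp add: case_prod_beta')
  also have "\<dots> = lin (\<lambda>(y, z). sc (- ksign (degC y)) (tau_jacobiator h y z)) (cmC b)"
  proof (rule lin_cong, clarify)
    fix y z
    have "ksign (degC y * degC z) * (ksign (degC z) * ksign ((degC z - 1) * (degC y - 1))) = - ksign (degC y)"
      by (simp only: ksign_add[symmetric] ksign_neg_iff) (simp add: algebra_simps)
    then show "sc (ksign (degC y * degC z)) (sc (ksign (degC z)) (tau_jacobiator h z y)) = sc (- ksign (degC y)) (tau_jacobiator h y z)"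
      unfolding tau_jacobiator_swap[of h z y] sc_sc by (simp only: mult.assoc)
  qed
  also have "\<dots> = - ?S"
    by (simp add: sc_minus_left lin_minus_fun case_prod_beta')
  finally show "?S = - ?S" .
qed

lemma twist_twist: "lin twist (twist (c, h)) = lin (\<lambda>(a, b). tens (bv a) (lin (\<lambda>(y, z). sc (ksign (degC y)) (lin (H.br (\<tau> y)) (H.br (\<tau> z) h))) (cmC b))) (cmC c)"
proof -
  define f where "f x y z = sc (ksign (degC y)) (tens (bv x) (lin (H.br (\<tau> y)) (H.br (\<tau> z) h)))" for x y z :: 'c
  have "lin twist (twist (c, h)) = lin (\<lambda>(a, b). lin (\<lambda>(a', b'). sc (ksign (degC a) * ksign (degC a')) (tens (bv a') (lin (H.br (\<tau> b')) (H.br (\<tau> b) h)))) (cmC a)) (cmC c)"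
    unfolding twist_def[of "(c, h)"] lin_lin fst_conv snd_conv
    by (rule lin_cong) (auto simp: lin_sc lin_twist_tens lin_sc_fun[symmetric] case_prod_beta')
  also have "\<dots> = lin (\<lambda>(a, b). lin (\<lambda>(x, y). f x y b) (cmC a)) (cmC c)"
  proof (rule lin_cong, clarify)
    fix a b
    show "lin (\<lambda>(a', b'). sc (ksign (degC a) * ksign (degC a')) (tens (bv a') (lin (H.br (\<tau> b')) (H.br (\<tau> b) h)))) (cmC a)
        = lin (\<lambda>(x, y). f x y b) (cmC a)"
    proof (rule C.lin_comult_cong)
      fix k l assume d: "degC k + degC l = degC a"
      have "ksign (degC a) * ksign (degC k) = ksign (degC l)"
        by (rule ksign_mult_eq) (simp add: d[symmetric])
      then show "(case (k, l) of (a', b') \<Rightarrow> sc (ksign (degC a) * ksign (degC a')) (tens (bv a') (lin (H.br (\<tau> b')) (H.br (\<tau> b) h))))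
          = (case (k, l) of (x, y) \<Rightarrow> f x y b)"
        by (simp add: f_def)
    qed
  qed
  also have "\<dots> = lin (\<lambda>(a, b). lin (\<lambda>(y, z). f a y z) (cmC b)) (cmC c)" by (rule C.lin_comult_coassoc)
  also have "\<dots> = lin (\<lambda>(a, b). tens (bv a) (lin (\<lambda>(y, z). sc (ksign (degC y)) (lin (H.br (\<tau> y)) (H.br (\<tau> z) h))) (cmC b))) (cmC c)"
    unfolding f_def by (rule lin_cong) (auto simp: tens_lin_right tens_sc_right case_prod_beta')
  finally show ?thesis .
qed

lemma twist_tensor_diff: "lin twist (tensor_diff (c, h)) = lin (\<lambda>(a, b). sc (ksign (degC a - 1)) (tens (dC a) (H.br (\<tau> b) h))
     + tens (bv a) (H.br (lin \<tau> (dC b)) h) + sc (ksign (degC c) * ksign (degC a)) (tens (bv a) (lin (H.br (\<tau> b)) (dH h)))) (cmC c)"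
proof -
  define \<Phi> where "\<Phi> = (\<lambda>(a, b). sc (ksign (degC a)) (tens (bv a) (H.br (\<tau> b) h)))"
  have ph: "lin (\<lambda>(a, b). sc (ksign (degC a)) (tens (bv a) (lin (H.br (\<tau> b)) (bv h)))) = lin \<Phi>"
    unfolding \<Phi>_def by simp
  have A: "lin twist (tens (dC c) (bv h)) = lin (\<lambda>(a, b). sc (ksign (degC a - 1)) (tens (dC a) (H.br (\<tau> b) h))
       + tens (bv a) (H.br (lin \<tau> (dC b)) h)) (cmC c)"
  proof -
    have "lin twist (tens (dC c) (bv h)) = lin (\<lambda>q. lin \<Phi> (tdiff degC dC dC q)) (cmC c)"
      unfolding lin_twist_tens ph C.comult_coderivation lin_lin ..
    also have "\<dots> = lin (\<lambda>(a, b). sc (ksign (degC a - 1)) (tens (dC a) (H.br (\<tau> b) h))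
       + tens (bv a) (H.br (lin \<tau> (dC b)) h)) (cmC c)"
    proof (rule lin_cong, clarify)
      fix a b
      have 1: "lin \<Phi> (tens (dC a) (bv b)) = sc (ksign (degC a - 1)) (tens (dC a) (H.br (\<tau> b) h))"
        unfolding \<Phi>_def lin_case_tens_bv by (rule lin_ksign_tens_bv1[OF C.diff_homog])
      have 2: "lin \<Phi> (tens (bv a) (dC b)) = sc (ksign (degC a)) (tens (bv a) (H.br (lin \<tau> (dC b)) h))"
        unfolding \<Phi>_def lin_tens lin_bv prod.case lin_sc_fun tens_lin_right[symmetric] H.br_lin[symmetric] ..
      show "lin \<Phi> (tdiff degC dC dC (a, b)) = sc (ksign (degC a - 1)) (tens (dC a) (H.br (\<tau> b) h)) + tens (bv a) (H.br (lin \<tau> (dC b)) h)"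
        unfolding tdiff_def fst_conv snd_conv lin_add lin_sc 1 2 sc_sc by simp
    qed
    finally show ?thesis .
  qed
  have B: "lin twist (tens (bv c) (dH h)) = lin (\<lambda>(a, b). sc (ksign (degC a)) (tens (bv a) (lin (H.br (\<tau> b)) (dH h)))) (cmC c)"
    unfolding lin_twist_tens by simp
  show ?thesis
    unfolding tdiff_def fst_conv snd_conv lin_add lin_sc A B lin_sc_fun[symmetric] lin_add_fun[symmetric]
    by (rule lin_cong) (auto simp: sc_sc)
qed

lemma tensor_diff_twist: "lin tensor_diff (twist (c, h)) = lin (\<lambda>(a, b). sc (ksign (degC a)) (tens (dC a) (H.br (\<tau> b) h))
     + tens (bv a) (H.br (lin dH (\<tau> b)) h) + sc (ksign (degC b - 1)) (tens (bv a) (lin (H.br (\<tau> b)) (dH h)))) (cmC c)"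
  unfolding twist_def lin_lin fst_conv snd_conv
proof (rule lin_cong, clarify)
  fix a b
  show "lin tensor_diff (sc (ksign (degC a)) (tens (bv a) (H.br (\<tau> b) h))) = sc (ksign (degC a)) (tens (dC a) (H.br (\<tau> b) h))
     + tens (bv a) (H.br (lin dH (\<tau> b)) h) + sc (ksign (degC b - 1)) (tens (bv a) (lin (H.br (\<tau> b)) (dH h)))"
    unfolding lin_sc lin_tensor_diff_tens[OF homog_bv[THEN iffD2, OF refl]] H.diff_br[OF tau_homog] lin_bv
    by (simp add: tens_add_right tens_sc_right sc_add_right add.assoc mult.assoc[symmetric])
qed

definition tau_cup :: "'c \<Rightarrow> 'h vec" where
  "tau_cup b = lin (\<lambda>(a', b'). sc (ksign (degC a')) (lin2 mH (\<tau> a') (\<tau> b'))) (cmC b)"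

lemma twist_tensor_diff_anticomm: "lin twist (tensor_diff (c, h)) + lin tensor_diff (twist (c, h)) = lin (\<lambda>(a, b). - tens (bv a) (H.br (tau_cup b) h)) (cmC c)"
  unfolding twist_tensor_diff tensor_diff_twist lin_add_fun[symmetric]
proof (rule C.lin_comult_cong)
  fix a b assume d: "degC a + degC b = degC c"
  have s1: "ksign (degC a - 1) = - ksign (degC a)" by (simp add: ksign_neg_iff)
  have s2: "ksign (degC c) * ksign (degC a) = - ksign (degC b - 1)"
    by (simp only: ksign_add[symmetric] ksign_neg_iff) (simp add: d[symmetric] algebra_simps)
  have q: "H.br (tau_cup b) h = - (H.br (lin dH (\<tau> b)) h + H.br (lin \<tau> (dC b)) h)"
  proof -
    have "tau_cup b = - (lin dH (\<tau> b) + lin \<tau> (dC b))" using twisting_eq[of b] unfolding tau_cup_def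
      by (subst (asm) add_eq_0_iff) simp
    then show ?thesis by (simp only: H.br_minus H.br_add)
  qed
  show "(case (a, b) of (a, b) \<Rightarrow> sc (ksign (degC a - 1)) (tens (dC a) (H.br (\<tau> b) h))
     + tens (bv a) (H.br (lin \<tau> (dC b)) h) + sc (ksign (degC c) * ksign (degC a)) (tens (bv a) (lin (H.br (\<tau> b)) (dH h))))
     + (case (a, b) of (a, b) \<Rightarrow> sc (ksign (degC a)) (tens (dC a) (H.br (\<tau> b) h)) + tens (bv a) (H.br (lin dH (\<tau> b)) h)
        + sc (ksign (degC b - 1)) (tens (bv a) (lin (H.br (\<tau> b)) (dH h))))
     = (case (a, b) of (a, b) \<Rightarrow> - tens (bv a) (H.br (tau_cup b) h))"
    unfolding prod.case s1 s2 q sc_minus_left tens_minus_right tens_add_right by simp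
qed

lemma D_eq: "D = (\<lambda>q. tensor_diff q + twist q)"
  by (rule ext) (rule twisted_diff_eq)

lemma comult_bracket_bracket:
  "lin (\<lambda>(y, z). sc (ksign (degC y)) (lin (H.br (\<tau> y)) (H.br (\<tau> z) h))) (cmC b) = H.br (tau_cup b) h"
proof -
  have "H.br (tau_cup b) h = lin (\<lambda>(y, z). sc (ksign (degC y)) (H.br (lin2 mH (\<tau> y) (\<tau> z)) h)) (cmC b)"
    unfolding tau_cup_def H.br_lin by (rule lin_cong) (auto simp: H.br_sc)
  moreover have "lin (\<lambda>(y, z). sc (ksign (degC y)) (tau_jacobiator h y z)) (cmC b)
      = lin (\<lambda>(y, z). sc (ksign (degC y)) (lin (H.br (\<tau> y)) (H.br (\<tau> z) h))) (cmC b)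
        - lin (\<lambda>(y, z). sc (ksign (degC y)) (H.br (lin2 mH (\<tau> y) (\<tau> z)) h)) (cmC b)"
    unfolding lin_diff_fun[symmetric] tau_jacobiator_def by (rule lin_cong) (auto simp: sc_diff_right)
  ultimately show ?thesis using comult_tau_jacobiator_eq_0 by simp
qed

lemma twisted_diff_square: "lin D (D p) = 0"
proof -
  obtain c h where p: "p = (c, h)" by fastforce
  have "lin D (D p) = lin tensor_diff (tensor_diff p) + (lin twist (tensor_diff p) + lin tensor_diff (twist p)) + lin twist (twist p)"
    unfolding D_eq lin_add_fun lin_add by (simp only: add_ac)
  also have "\<dots> = lin (\<lambda>(a, b). - tens (bv a) (H.br (tau_cup b) h)) (cmC c)
      + lin (\<lambda>(a, b). tens (bv a) (H.br (tau_cup b) h)) (cmC c)"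
    unfolding p tensor_diff_square twist_tensor_diff_anticomm twist_twist comult_bracket_bracket by simp
  also have "\<dots> = 0"
    by (simp add: lin_add_fun[symmetric] case_prod_unfold)
  finally show ?thesis .
qed

lemma homog_twist: "homog (tdeg degC degH) (tdeg degC degH p - 1) (twist p)"
proof -
  obtain c h where p: "p = (c, h)" by fastforce
  show ?thesis
    unfolding p twist_def fst_conv snd_conv
  proof (rule homog_lin)
    fix q assume q: "q \<in> keys (cmC c)"
    obtain a b where qab: "q = (a, b)" by fastforce
    have d: "degC a + degC b = degC c" using homogD[OF C.comult_homog q] by (simp add: qab tdeg_def)
    have "homog (tdeg degC degH) (degC a + (degC b - 1 + degH h)) (tens (bv a) (H.br (\<tau> b) h))"
      by (rule homog_tens[OF homog_bv[THEN iffD2, OF refl] H.homog_br[OF tau_homog]])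
    then show "homog (tdeg degC degH) (tdeg degC degH (c, h) - 1) ((\<lambda>(a, b). sc (ksign (degC a)) (tens (bv a) (H.br (\<tau> b) h))) q)"
      unfolding qab prod.case by (intro homog_sc) (simp add: tdeg_def d[symmetric] algebra_simps)
  qed
qed

lemma homog_twisted_diff: "homog (tdeg degC degH) (tdeg degC degH p - 1) (D p)"
  unfolding twisted_diff_eq by (rule homog_add[OF homog_tensor_diff homog_twist])

lemma leibniz_twisted_diff: "leibniz (tdeg degC degH) tensor_mult D"
  unfolding leibniz_def
proof (intro allI)
  fix p q :: "'c \<times> 'h"
  obtain c h where p: "p = (c, h)" by fastforce
  obtain c' h' where q: "q = (c', h')" by fastforce
  show "lin D (tensor_mult p q) = lin2 tensor_mult (D p) (bv q) + sc (ksign (tdeg degC degH p)) (lin2 tensor_mult (bv p) (D q))"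
    unfolding p q D_eq lin2_bv_right lin2_bv_left lin_add_fun lin_add tensor_diff_leibniz twist_leibniz sc_add_right tdeg_def fst_conv snd_conv
    by (simp only: add_ac)
qed

lemma dg_algebra_twisted_tensor: "dg_algebra (tdeg degC degH) tensor_mult (tens uC uH) D"
  unfolding dg_algebra_def is_differential_def
  using tensor_graded_algebra[OF C.graded H.graded] homog_twisted_diff twisted_diff_square leibniz_twisted_diff by blast

end

theorem theorem3p22:
  fixes degC :: "'c::finite \<Rightarrow> int" and mC :: "'c \<Rightarrow> 'c \<Rightarrow> 'c vec" and uC :: "'c vec"
    and dC :: "'c \<Rightarrow> 'c vec" and ip :: "'c \<Rightarrow> 'c \<Rightarrow> rat" and cmC :: "'c \<Rightarrow> ('c \<times> 'c) vec"
    and degH :: "'h \<Rightarrow> int" and mH :: "'h \<Rightarrow> 'h \<Rightarrow> 'h vec" and uH :: "'h vec"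
    and dH :: "'h \<Rightarrow> 'h vec" and cmH :: "'h \<Rightarrow> ('h \<times> 'h) vec" and eH :: "'h \<Rightarrow> rat"
    and \<tau> :: "'c \<Rightarrow> 'h vec"
  assumes frob: "dg_frobenius degC mC uC dC ip"
    and comult: "induced_comult degC mC ip cmC"
    and coalg: "dg_coalgebra degC cmC dC"
    and cocomm: "cocommutative degC cmC"
    and bialg: "dg_bialgebra degH mH uH dH cmH eH"
    and tw: "twisting_cochain degC cmC dC degH mH dH \<tau>"
    and prim: "\<forall>c. \<tau> c \<in> Prim cmH uH"
  shows "dg_algebra (tdeg degC degH) (tmul degC degH mC mH) (tens uC uH)
           (twisted_diff degC cmC dC degH mH dH \<tau>)"
proof -
  interpret C: frobenius_coalg degC mC uC dC ip cmC
    using frob comult coalg by unfold_locales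
  interpret H: dg_alg degH mH uH dH
    using bialg unfolding dg_bialgebra_def by unfold_locales blast
  interpret twisted_tensor degC mC uC dC ip cmC degH mH uH dH \<tau>
    using cocomm tw by unfold_locales
  show ?thesis by (rule dg_algebra_twisted_tensor)
qed

end
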